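(* Assume the Framework and the Purification Postulate. A pure state $\Psi\in\mathfrak S_1(\mathrm A\mathrm C)$ is dynamically faithful for system $\mathrm A$ if and only if its marginal $\omega:=(\mathcal I_{\mathrm A}\otimes e_{\mathrm C})\Psi$ is an internal state of $\mathrm A$. In particular, any purification of an internal state of $\mathrm A$ is dynamically faithful for $\mathrm A$.
   Context: Framework. We work in an operational-probabilistic theory: there is a collection of systems $\mathrm A,\mathrm B,\dots$, closed under a composition $\mathrm A\mathrm B$ (associative, symmetric up to a reversible swap, with a trivial system $\mathrm I$ satisfying $\mathrm A\mathrm I=\mathrm A$); for each pair of systems a set $\mathfrak T(\mathrm A,\mathrm B)$ of transformations; a test from $\mathrm A$ to $\mathrm B$ is a finite collection $\{\mathcal C_i\}_{i\in X}\subseteq\mathfrak T(\mathrm A,\mathrm B)$, and every transformation belongs to some test. Tests are closed under sequential composition, parallel composition ($\otimes$), coarse-graining (summing outcomes over the blocks of a partition of $X$) and conditioning (choosing the next test depending on the outcome of the previous one). States of $\mathrm A$ are the elements of $\mathfrak S(\mathrm A):=\mathfrak T(\mathrm I,\mathrm A)$, effects are the elements of $\mathfrak T(\mathrm A,\mathrm I)$, and transformations $\mathrm I\to\mathrm I$ are probabilities in $[0,1]$ (those of a test sum to $1$; composition is multiplication). An effect $a$ and a state $\rho$ give the probability $(a|\rho)$. States (effects) are identified when they give equal probabilities on all effects (states); transformations $\mathcal C,\mathcal C'$ are identified when $\mathcal C\otimes\mathcal I_{\mathrm S}$ and $\mathcal C'\otimes\mathcal I_{\mathrm S}$ act identically on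 all states of $\mathrm A\mathrm S$ for every system $\mathrm S$. States span a finite-dimensional real vector space $\mathfrak S_{\mathbb R}(\mathrm A)$, transformations act linearly, and $\mathfrak T_{\mathbb R}(\mathrm A,\mathrm B)$ is the real span of $\mathfrak T(\mathrm A,\mathrm B)$. Standing assumptions: (i) causality: each system $\mathrm A$ has a unique deterministic effect $e_{\mathrm A}$ (the effect forming a one-outcome observation test), and $e_{\mathrm A\mathrm B}=e_{\mathrm A}\otimes e_{\mathrm B}$; (ii) local discriminability: if two states of $\mathrm A\mathrm B$ differ, some product effect $a\otimes b$ gives them different probabilities; (iii) all sets of states are closed, the theory is not deterministic (hence all sets of states, effects and transformations are convex), and perfectly distinguishable states exist. A state $\rho$ is normalized if $(e|\rho)=1$; $\mathfrak S_1(\mathrm A)$ is the set of normalized states. A channel is a $\mathcal C\in\mathfrak T(\mathrm A,\mathrm B)$ with $e_{\mathrm B}\circ\mathcal C=e_{\mathrm A}$. A channel $\mathcal U\in\mathfrak T(\mathrm A,\mathrm B)$ is reversible if some channel $\mathcal W\in\mathfrak T(\mathrm B,\mathrm A)$ satisfies $\mathcal W\mathcal U=\mathcal I_{\mathrm A}$, $\mathcal U\mathcal W=\mathcal I_{\mathrm B}$; $\mathbf G_{\mathrm A}$ is the group of reversible channels on $\mathrm A$. The marginal of a state $\sigma$ of $\mathrm A\mathrm B$ on $\mathrm A$ is $(\mathcal I_{\mathrm A}\otimes e_{\mathrm B})\sigma$. Refinement. For $\mathcal C\in\mathfrak T(\mathrm A,\mathrm B)$, write $\mathcal D\prec\mathcal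 C$ if there are a test $\{\mathcal D_j\}_{j\in Y}$ and $Y_0\subseteq Y$ with $\mathcal C=\sum_{j\in Y_0}\mathcal D_j$ and $\mathcal D\in\{\mathcal D_j\}_{j\in Y_0}$; the refinement set is $D_{\mathcal C}=\{\mathcal D:\mathcal D\prec\mathcal C\}$. $\mathcal C$ is atomic if $\mathcal D\prec\mathcal C$ implies $\mathcal D=\lambda\mathcal C$ for some $\lambda\in[0,1]$. A pure state is an atomic state; a state is mixed otherwise. A state $\omega$ of $\mathrm A$ is internal if $\mathrm{Span}(D_\omega)=\mathfrak S_{\mathbb R}(\mathrm A)$. Purification Postulate. For every $\rho\in\mathfrak S_1(\mathrm A)$ there are a system $\mathrm B$ and a pure $\Psi\in\mathfrak S_1(\mathrm A\mathrm B)$ with $(\mathcal I_{\mathrm A}\otimes e_{\mathrm B})\Psi=\rho$ (a purification of $\rho$, with purifying system $\mathrm B$); and if $\Psi,\Psi'\in\mathfrak S_1(\mathrm A\mathrm B)$ are purifications of the same state, then $\Psi'=(\mathcal I_{\mathrm A}\otimes\mathcal U)\Psi$ for some $\mathcal U\in\mathbf G_{\mathrm B}$. A state $\sigma\in\mathfrak S(\mathrm A\mathrm C)$ is dynamically faithful for system $\mathrm A$ if for every system $\mathrm B$ and every $\mathcal A,\mathcal A'\in\mathfrak T(\mathrm A,\mathrm B)$, $(\mathcal A\otimes\mathcal I_{\mathrm C})\sigma=(\mathcal A'\otimes\mathcal I_{\mathrm C})\sigma$ implies $\mathcal A=\mathcal A'$. *)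

theory Defs
  imports "HOL-Analysis.Analysis"
begin

section \<open>Operational-probabilistic theories (OPTs)\<close>

text \<open>
  Systems are the elements of a type 's; transformations (already identified up to
  operational equivalence) are the elements of a type 't.
  Tr T A B is the set of transformations from A to B; a test from A to B is a finite,
  nonempty family of transformations, represented as a list (index set = list positions).
  seqc T D C is the sequential composition "D after C", parc T C D is the parallel
  composition C (x) D, idt T A the identity of A, swp T A B the swap AB -> BA, and
  prb T p the probability (a number in [0,1]) that a transformation p : I -> I is.
\<close>

record ('s, 't) opt_data =
  sc   :: "'s \<Rightarrow> 's \<Rightarrow> 's"
  sI   :: "'s"
  Tr   :: "'s \<Rightarrow> 's \<Rightarrow> 't set"
  Tests :: "'s \<Rightarrow> 's \<Rightarrow> 't list set"
  seqc :: "'t \<Rightarrow> 't \<Rightarrow> 't"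
  parc :: "'t \<Rightarrow> 't \<Rightarrow> 't"
  idt  :: "'s \<Rightarrow> 't"
  swp  :: "'s \<Rightarrow> 's \<Rightarrow> 't"
  prb  :: "'t \<Rightarrow> real"

definition St :: "('s,'t) opt_data \<Rightarrow> 's \<Rightarrow> 't set" where
  "St T A = Tr T (sI T) A"

definition Eff :: "('s,'t) opt_data \<Rightarrow> 's \<Rightarrow> 't set" where
  "Eff T A = Tr T A (sI T)"

definition ext_prob :: "('s,'t) opt_data \<Rightarrow> 't \<Rightarrow> 's \<Rightarrow> 't \<Rightarrow> 't \<Rightarrow> real" where
  "ext_prob T C S \<rho> e = prb T (seqc T e (seqc T (parc T C (idt T S)) \<rho>))"

text \<open>C acts as the real linear combination \<Sum> c_i D_i of transformations in T(A,B)
  (equality in T_R(A,B), expressed operationally through all extensions).\<close>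

definition acts_lin :: "('s,'t) opt_data \<Rightarrow> 's \<Rightarrow> 's \<Rightarrow> 't \<Rightarrow> (real \<times> 't) list \<Rightarrow> bool" where
  "acts_lin T A B C cs \<longleftrightarrow> C \<in> Tr T A B \<and> (\<forall>(c,D)\<in>set cs. D \<in> Tr T A B) \<and>
     (\<forall>S. \<forall>\<rho>\<in>Tr T (sI T) (sc T A S). \<forall>e\<in>Tr T (sc T B S) (sI T).
        ext_prob T C S \<rho> e = sum_list (map (\<lambda>(c,D). c * ext_prob T D S \<rho> e) cs))"

definition is_sum :: "('s,'t) opt_data \<Rightarrow> 's \<Rightarrow> 's \<Rightarrow> 't \<Rightarrow> 't list \<Rightarrow> bool" where
  "is_sum T A B C Ds \<longleftrightarrow> acts_lin T A B C (map (\<lambda>D. (1, D)) Ds)"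

text \<open>Deterministic (unique, by causality) effect of A: the effect forming a one-outcome test.\<close>

definition det_eff :: "('s,'t) opt_data \<Rightarrow> 's \<Rightarrow> 't" where
  "det_eff T A = (THE e. [e] \<in> Tests T A (sI T))"

definition channel :: "('s,'t) opt_data \<Rightarrow> 's \<Rightarrow> 's \<Rightarrow> 't \<Rightarrow> bool" where
  "channel T A B C \<longleftrightarrow> C \<in> Tr T A B \<and> seqc T (det_eff T B) C = det_eff T A"

definition reversible :: "('s,'t) opt_data \<Rightarrow> 's \<Rightarrow> 's \<Rightarrow> 't \<Rightarrow> bool" where
  "reversible T A B U \<longleftrightarrow> channel T A B U \<and>
     (\<exists>W. channel T B A W \<and> seqc T W U = idt T A \<and> seqc T U W = idt T B)"

definition revgroup :: "('s,'t) opt_data \<Rightarrow> 's \<Rightarrow> 't set" where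
  "revgroup T A = {U. reversible T A A U}"

definition normalized :: "('s,'t) opt_data \<Rightarrow> 's \<Rightarrow> 't \<Rightarrow> bool" where
  "normalized T A \<rho> \<longleftrightarrow> \<rho> \<in> St T A \<and> prb T (seqc T (det_eff T A) \<rho>) = 1"

definition St1 :: "('s,'t) opt_data \<Rightarrow> 's \<Rightarrow> 't set" where
  "St1 T A = {\<rho>. normalized T A \<rho>}"

definition marginal :: "('s,'t) opt_data \<Rightarrow> 's \<Rightarrow> 's \<Rightarrow> 't \<Rightarrow> 't" where
  "marginal T A B \<Psi> = seqc T (parc T (idt T A) (det_eff T B)) \<Psi>"

definition refines :: "('s,'t) opt_data \<Rightarrow> 's \<Rightarrow> 's \<Rightarrow> 't \<Rightarrow> 't \<Rightarrow> bool" where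
  "refines T A B D C \<longleftrightarrow> (\<exists>Ds\<in>Tests T A B. \<exists>Y0. Y0 \<subseteq> {..<length Ds} \<and>
      is_sum T A B C (map (nth Ds) (sorted_list_of_set Y0)) \<and> D \<in> nth Ds ` Y0)"

definition refset :: "('s,'t) opt_data \<Rightarrow> 's \<Rightarrow> 's \<Rightarrow> 't \<Rightarrow> 't set" where
  "refset T A B C = {D. refines T A B D C}"

definition atomic :: "('s,'t) opt_data \<Rightarrow> 's \<Rightarrow> 's \<Rightarrow> 't \<Rightarrow> bool" where
  "atomic T A B C \<longleftrightarrow> C \<in> Tr T A B \<and>
     (\<forall>D. refines T A B D C \<longrightarrow> (\<exists>l\<in>{0..1}. acts_lin T A B D [(l, C)]))"

definition pure_state :: "('s,'t) opt_data \<Rightarrow> 's \<Rightarrow> 't \<Rightarrow> bool" where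
  "pure_state T A \<rho> \<longleftrightarrow> atomic T (sI T) A \<rho>"

text \<open>The vector space S_R(A): a state is represented by its probability functional on effects
  (states are identified by these probabilities), so S_R(A) is the real span of these functionals.\<close>

definition svec :: "('s,'t) opt_data \<Rightarrow> 's \<Rightarrow> 't \<Rightarrow> ('t \<Rightarrow> real)" where
  "svec T A \<rho> = (\<lambda>e. if e \<in> Eff T A then prb T (seqc T e \<rho>) else 0)"

definition rspan :: "('t \<Rightarrow> real) set \<Rightarrow> ('t \<Rightarrow> real) set" where
  "rspan V = {f. \<exists>F c. finite F \<and> F \<subseteq> V \<and> f = (\<lambda>x. \<Sum>v\<in>F. c v * v x)}"

definition internal :: "('s,'t) opt_data \<Rightarrow> 's \<Rightarrow> 't \<Rightarrow> bool" where
  "internal T A \<omega> \<longleftrightarrow> \<omega> \<in> St T A \<and>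
     rspan (svec T A ` refset T (sI T) A \<omega>) = rspan (svec T A ` St T A)"

definition dyn_faithful :: "('s,'t) opt_data \<Rightarrow> 's \<Rightarrow> 's \<Rightarrow> 't \<Rightarrow> bool" where
  "dyn_faithful T A C \<sigma> \<longleftrightarrow> \<sigma> \<in> St T (sc T A C) \<and>
     (\<forall>B X X'. X \<in> Tr T A B \<longrightarrow> X' \<in> Tr T A B \<longrightarrow>
        seqc T (parc T X (idt T C)) \<sigma> = seqc T (parc T X' (idt T C)) \<sigma> \<longrightarrow> X = X')"

section \<open>The Framework (standing assumptions)\<close>

locale opt =
  fixes T :: "('s, 't) opt_data"
  assumes
    sc_assoc: "\<And>A B C. sc T (sc T A B) C = sc T A (sc T B C)" and
    sc_unit_r: "\<And>A. sc T A (sI T) = A" and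
    sc_unit_l: "\<And>A. sc T (sI T) A = A" and
    seqc_Tr: "\<And>A B C f g. f \<in> Tr T A B \<Longrightarrow> g \<in> Tr T B C \<Longrightarrow> seqc T g f \<in> Tr T A C" and
    parc_Tr: "\<And>A B C D f g. f \<in> Tr T A B \<Longrightarrow> g \<in> Tr T C D \<Longrightarrow>
                 parc T f g \<in> Tr T (sc T A C) (sc T B D)" and
    idt_Tr: "\<And>A. idt T A \<in> Tr T A A" and
    swp_Tr: "\<And>A B. swp T A B \<in> Tr T (sc T A B) (sc T B A)" and
    seqc_assoc: "\<And>A B C D f g h. f \<in> Tr T A B \<Longrightarrow> g \<in> Tr T B C \<Longrightarrow> h \<in> Tr T C D \<Longrightarrow>
                   seqc T h (seqc T g f) = seqc T (seqc T h g) f" and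
    seqc_id_l: "\<And>A B f. f \<in> Tr T A B \<Longrightarrow> seqc T (idt T B) f = f" and
    seqc_id_r: "\<And>A B f. f \<in> Tr T A B \<Longrightarrow> seqc T f (idt T A) = f" and
    parc_assoc: "\<And>A B C D E F f g h. f \<in> Tr T A B \<Longrightarrow> g \<in> Tr T C D \<Longrightarrow> h \<in> Tr T E F \<Longrightarrow>
                   parc T (parc T f g) h = parc T f (parc T g h)" and
    parc_unit_l: "\<And>A B f. f \<in> Tr T A B \<Longrightarrow> parc T (idt T (sI T)) f = f" and
    parc_unit_r: "\<And>A B f. f \<in> Tr T A B \<Longrightarrow> parc T f (idt T (sI T)) = f" and
    parc_id: "\<And>A B. parc T (idt T A) (idt T B) = idt T (sc T A B)" and
    interchange: "\<And>A B C D E F f g h k. f \<in> Tr T A B \<Longrightarrow> g \<in> Tr T B C \<Longrightarrow>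
                   h \<in> Tr T D E \<Longrightarrow> k \<in> Tr T E F \<Longrightarrow>
                   seqc T (parc T g k) (parc T f h) = parc T (seqc T g f) (seqc T k h)" and
    swp_natural: "\<And>A B C D f g. f \<in> Tr T A B \<Longrightarrow> g \<in> Tr T C D \<Longrightarrow>
                   seqc T (swp T B D) (parc T f g) = seqc T (parc T g f) (swp T A C)" and
    swp_inv: "\<And>A B. seqc T (swp T B A) (swp T A B) = idt T (sc T A B)" and
    Tests_Tr: "\<And>A B Cs. Cs \<in> Tests T A B \<Longrightarrow> Cs \<noteq> [] \<and> set Cs \<subseteq> Tr T A B" and
    Tr_in_test: "\<And>A B C. C \<in> Tr T A B \<Longrightarrow> \<exists>Cs\<in>Tests T A B. C \<in> set Cs" and
    idt_test: "\<And>A. [idt T A] \<in> Tests T A A" and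
    swp_test: "\<And>A B. [swp T A B] \<in> Tests T (sc T A B) (sc T B A)" and
    seq_test: "\<And>A B C Cs Ds. Cs \<in> Tests T A B \<Longrightarrow> Ds \<in> Tests T B C \<Longrightarrow>
                 concat (map (\<lambda>c. map (\<lambda>d. seqc T d c) Ds) Cs) \<in> Tests T A C" and
    par_test: "\<And>A B C D Cs Ds. Cs \<in> Tests T A B \<Longrightarrow> Ds \<in> Tests T C D \<Longrightarrow>
                 concat (map (\<lambda>c. map (\<lambda>d. parc T c d) Ds) Cs) \<in> Tests T (sc T A C) (sc T B D)" and
    cond_test: "\<And>A B C Cs Dss. Cs \<in> Tests T A B \<Longrightarrow> length Dss = length Cs \<Longrightarrow>
                 (\<forall>i<length Cs. Dss ! i \<in> Tests T B C) \<Longrightarrow>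
                 concat (map (\<lambda>i. map (\<lambda>d. seqc T d (Cs ! i)) (Dss ! i)) [0..<length Cs])
                   \<in> Tests T A C" and
    coarse_test: "\<And>A B Cs m (f :: nat \<Rightarrow> nat). Cs \<in> Tests T A B \<Longrightarrow>
                 (\<forall>i<length Cs. f i < m) \<Longrightarrow> (\<forall>j<m. \<exists>i<length Cs. f i = j) \<Longrightarrow>
                 \<exists>Ds\<in>Tests T A B. length Ds = m \<and>
                    (\<forall>j<m. is_sum T A B (Ds ! j) (map (nth Cs) (filter (\<lambda>i. f i = j) [0..<length Cs])))" and
    prb_range: "\<And>p. p \<in> Tr T (sI T) (sI T) \<Longrightarrow> 0 \<le> prb T p \<and> prb T p \<le> 1" and
    prb_inj: "inj_on (prb T) (Tr T (sI T) (sI T))" and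
    prb_seqc: "\<And>p q. p \<in> Tr T (sI T) (sI T) \<Longrightarrow> q \<in> Tr T (sI T) (sI T) \<Longrightarrow>
                 prb T (seqc T p q) = prb T p * prb T q" and
    prb_parc: "\<And>p q. p \<in> Tr T (sI T) (sI T) \<Longrightarrow> q \<in> Tr T (sI T) (sI T) \<Longrightarrow>
                 prb T (parc T p q) = prb T p * prb T q" and
    prb_test: "\<And>Ps. Ps \<in> Tests T (sI T) (sI T) \<Longrightarrow> sum_list (map (prb T) Ps) = 1" and
    state_ident: "\<And>A \<rho> \<rho>'. \<rho> \<in> St T A \<Longrightarrow> \<rho>' \<in> St T A \<Longrightarrow>
                 (\<forall>e\<in>Eff T A. prb T (seqc T e \<rho>) = prb T (seqc T e \<rho>')) \<Longrightarrow> \<rho> = \<rho>'" and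
    effect_ident: "\<And>A a a'. a \<in> Eff T A \<Longrightarrow> a' \<in> Eff T A \<Longrightarrow>
                 (\<forall>\<rho>\<in>St T A. prb T (seqc T a \<rho>) = prb T (seqc T a' \<rho>)) \<Longrightarrow> a = a'" and
    trans_ident: "\<And>A B C C'. C \<in> Tr T A B \<Longrightarrow> C' \<in> Tr T A B \<Longrightarrow>
                 (\<forall>S. \<forall>\<rho>\<in>St T (sc T A S).
                    seqc T (parc T C (idt T S)) \<rho> = seqc T (parc T C' (idt T S)) \<rho>) \<Longrightarrow> C = C'" and
    fin_dim: "\<And>A. \<exists>F. finite F \<and> F \<subseteq> St T A \<and> svec T A ` St T A \<subseteq> rspan (svec T A ` F)" and
    causal: "\<And>A. \<exists>!e. [e] \<in> Tests T A (sI T)" and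
    causal_par: "\<And>A B. det_eff T (sc T A B) = parc T (det_eff T A) (det_eff T B)" and
    local_discr: "\<And>A B \<rho> \<sigma>. \<rho> \<in> St T (sc T A B) \<Longrightarrow> \<sigma> \<in> St T (sc T A B) \<Longrightarrow> \<rho> \<noteq> \<sigma> \<Longrightarrow>
                 \<exists>a\<in>Eff T A. \<exists>b\<in>Eff T B.
                    prb T (seqc T (parc T a b) \<rho>) \<noteq> prb T (seqc T (parc T a b) \<sigma>)" and
    states_closed: "\<And>A. closed (svec T A ` St T A)" and
    nondeterministic: "\<exists>p\<in>Tr T (sI T) (sI T). 0 < prb T p \<and> prb T p < 1" and
    convex_Tr: "\<And>A B C C' l. C \<in> Tr T A B \<Longrightarrow> C' \<in> Tr T A B \<Longrightarrow> 0 \<le> l \<Longrightarrow> l \<le> 1 \<Longrightarrow>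
                 \<exists>D. acts_lin T A B D [(l, C), (1 - l, C')]" and
    perf_dist: "\<exists>A \<rho>0 \<rho>1 a0 a1. \<rho>0 \<in> St1 T A \<and> \<rho>1 \<in> St1 T A \<and> [a0, a1] \<in> Tests T A (sI T) \<and>
                 prb T (seqc T a0 \<rho>0) = 1 \<and> prb T (seqc T a1 \<rho>0) = 0 \<and>
                 prb T (seqc T a0 \<rho>1) = 0 \<and> prb T (seqc T a1 \<rho>1) = 1"

section \<open>Purification Postulate\<close>

locale purif_opt = opt T for T :: "('s, 't) opt_data" +
  assumes
    purif_exists: "\<And>A \<rho>. \<rho> \<in> St1 T A \<Longrightarrow>
       \<exists>B \<Psi>. \<Psi> \<in> St1 T (sc T A B) \<and> pure_state T (sc T A B) \<Psi> \<and> marginal T A B \<Psi> = \<rho>" and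
    purif_unique: "\<And>A B \<Psi> \<Psi>'. \<Psi> \<in> St1 T (sc T A B) \<Longrightarrow> \<Psi>' \<in> St1 T (sc T A B) \<Longrightarrow>
       pure_state T (sc T A B) \<Psi> \<Longrightarrow> pure_state T (sc T A B) \<Psi>' \<Longrightarrow>
       marginal T A B \<Psi> = marginal T A B \<Psi>' \<Longrightarrow>
       \<exists>U\<in>revgroup T B. \<Psi>' = seqc T (parc T (idt T A) U) \<Psi>"

end

theory Submission
  imports Defs "HOL-Library.Function_Algebras"
begin

text \<open>
  Faithful implies internal holds for every state, without purification. Every effect \<open>c\<close> of
  \<open>C\<close> turns \<open>\<Psi>\<close> into a refinement \<open>(I \<otimes> c) \<Psi>\<close> of \<open>\<omega>\<close>, so two effects of \<open>A\<close> that agree on all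
  refinements of \<open>\<omega>\<close> act identically on \<open>\<Psi>\<close>. If the refinements of \<open>\<omega>\<close> did not span the state
  space, finite dimensionality would give a real combination of effects vanishing on them but
  not on some state; split into positive and negative parts and realised by convex mixing, it
  is (up to a factor) the difference of two distinct effects agreeing on all refinements.

  Internal implies faithful rests on steering, proved from the purification postulate: every
  refinement \<open>D\<close> of \<open>\<omega>\<close> equals \<open>(I \<otimes> b) \<Psi>\<close> for an effect \<open>b\<close> of \<open>C\<close>. We flag \<open>D\<close> with
  perfectly distinguishable states, purify the flagged state, and transfer the effect reading
  the flag to \<open>\<Psi>\<close> by uniqueness of purification, applied to \<open>\<Psi> \<otimes> \<Phi>\<close> and a relabelled
  \<open>\<Phi> \<otimes> \<Psi>\<close>. Hence \<open>X \<otimes> I\<close> and \<open>X' \<otimes> I\<close> agreeing on \<open>\<Psi>\<close> agree on every refinement of \<open>\<omega>\<close>,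
  by linearity and internality on every state of \<open>A\<close>, and so \<open>X = X'\<close> by local
  discriminability.
\<close>

section \<open>Algebra of sequential and parallel composition\<close>

context opt begin

abbreviation "II \<equiv> sI T"
abbreviation "ID A \<equiv> idt T A"
abbreviation cmp (infixr "\<circ>\<^sub>T" 75) where "g \<circ>\<^sub>T f \<equiv> seqc T g f"
abbreviation ten (infixr "\<otimes>\<^sub>T" 80) where "f \<otimes>\<^sub>T g \<equiv> parc T f g"
abbreviation "E A \<equiv> det_eff T A"

declare sc_assoc[simp] sc_unit_l[simp] sc_unit_r[simp]

text \<open>Typing rules with equational side conditions, so that \<open>auto intro!: Tr_rules\<close> can type
  composite transformations up to associativity of systems.\<close>

lemma Tr_seqI[intro]: "f \<in> Tr T A B \<Longrightarrow> g \<in> Tr T B C \<Longrightarrow> g \<circ>\<^sub>T f \<in> Tr T A C"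
  by (rule seqc_Tr)

lemma Tr_parI: "f \<in> Tr T A B \<Longrightarrow> g \<in> Tr T C D \<Longrightarrow> sc T A C = X \<Longrightarrow> sc T B D = Y \<Longrightarrow>
    f \<otimes>\<^sub>T g \<in> Tr T X Y"
  using parc_Tr by blast

lemma Tr_seqI_cong: "f \<in> Tr T A B \<Longrightarrow> g \<in> Tr T B' C \<Longrightarrow> B' = B \<Longrightarrow> g \<circ>\<^sub>T f \<in> Tr T A C"
  using seqc_Tr by blast

lemma Tr_swpI: "sc T A B = X \<Longrightarrow> sc T B A = Y \<Longrightarrow> swp T A B \<in> Tr T X Y"
  using swp_Tr by blast

lemma Tr_idI: "A = B \<Longrightarrow> ID A \<in> Tr T A B"
  using idt_Tr by simp

lemma det_eff_test: "[E A] \<in> Tests T A II"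
  unfolding det_eff_def using causal[of A] by (rule theI')

lemma det_eff_Tr[simp, intro]: "E A \<in> Tr T A II"
  using Tests_Tr[OF det_eff_test] by auto

lemma det_eff_unique: "[e] \<in> Tests T A II \<Longrightarrow> e = E A"
  using causal[of A] det_eff_test by blast

lemma Tr_detI: "B = II \<Longrightarrow> E A \<in> Tr T A B"
  by simp

lemmas Tr_rules = Tr_parI Tr_seqI_cong Tr_swpI Tr_idI Tr_detI

lemma idt_Tr_simp[simp, intro]: "ID A \<in> Tr T A A"
  by (rule idt_Tr)

lemma prb_eq_one_imp_id: "p \<in> Tr T II II \<Longrightarrow> prb T p = 1 \<Longrightarrow> p = ID II"
  using prb_inj prb_test[OF idt_test[of II]] by (auto dest: inj_onD[where x=p and y="ID II"])

lemma seqc_assoc_rev: "f \<in> Tr T A B \<Longrightarrow> g \<in> Tr T B C \<Longrightarrow> h \<in> Tr T C D \<Longrightarrow>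
    (h \<circ>\<^sub>T g) \<circ>\<^sub>T f = h \<circ>\<^sub>T (g \<circ>\<^sub>T f)"
  using seqc_assoc by metis

lemma parc_unit_right_simp[simp]: "f \<in> Tr T A B \<Longrightarrow> f \<otimes>\<^sub>T ID II = f"
  by (rule parc_unit_r)

lemma parc_unit_left_simp[simp]: "f \<in> Tr T A B \<Longrightarrow> ID II \<otimes>\<^sub>T f = f"
  by (rule parc_unit_l)

lemma seqc_id_id[simp]: "ID S \<circ>\<^sub>T ID S = ID S"
  by (rule seqc_id_l[OF idt_Tr])

lemma seq_par_id_right: "f \<in> Tr T A B \<Longrightarrow> g \<in> Tr T B C \<Longrightarrow>
    (g \<otimes>\<^sub>T ID S) \<circ>\<^sub>T (f \<otimes>\<^sub>T ID S) = (g \<circ>\<^sub>T f) \<otimes>\<^sub>T ID S"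
  using interchange[of f A B g C "ID S" S S "ID S" S] by (simp add: seqc_id_l)

lemma seq_par_id_left: "f \<in> Tr T A B \<Longrightarrow> g \<in> Tr T B C \<Longrightarrow>
    (ID S \<otimes>\<^sub>T g) \<circ>\<^sub>T (ID S \<otimes>\<^sub>T f) = ID S \<otimes>\<^sub>T (g \<circ>\<^sub>T f)"
  using interchange[of "ID S" S S "ID S" S f A B g C] by (simp add: seqc_id_l)

lemma par_split_second_first: "f \<in> Tr T A B \<Longrightarrow> g \<in> Tr T C D \<Longrightarrow>
    (f \<otimes>\<^sub>T ID D) \<circ>\<^sub>T (ID A \<otimes>\<^sub>T g) = f \<otimes>\<^sub>T g"
  using interchange[of "ID A" A A f B g C D "ID D" D] by (simp add: seqc_id_l seqc_id_r)

lemma par_split_first_first: "f \<in> Tr T A B \<Longrightarrow> g \<in> Tr T C D \<Longrightarrow>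
    (ID B \<otimes>\<^sub>T g) \<circ>\<^sub>T (f \<otimes>\<^sub>T ID C) = f \<otimes>\<^sub>T g"
  using interchange[of f A B "ID B" B "ID C" C C g D] by (simp add: seqc_id_l seqc_id_r)

lemma par_states: "a \<in> Tr T X A \<Longrightarrow> b \<in> Tr T Y B \<Longrightarrow> \<Psi> \<in> Tr T II X \<Longrightarrow> \<Phi> \<in> Tr T II Y \<Longrightarrow>
    (a \<otimes>\<^sub>T b) \<circ>\<^sub>T (\<Psi> \<otimes>\<^sub>T \<Phi>) = (a \<circ>\<^sub>T \<Psi>) \<otimes>\<^sub>T (b \<circ>\<^sub>T \<Phi>)"
  using interchange[of \<Psi> II X a A \<Phi> II Y b B] by simp

lemma state_tensor_left: "\<rho> \<in> Tr T II X \<Longrightarrow> r \<in> Tr T II S \<Longrightarrow> \<rho> \<otimes>\<^sub>T r = (ID X \<otimes>\<^sub>T r) \<circ>\<^sub>T \<rho>"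
  using par_split_first_first[of \<rho> II X r II S] by simp

lemma state_tensor_right: "\<rho> \<in> Tr T II X \<Longrightarrow> r \<in> Tr T II S \<Longrightarrow> \<rho> \<otimes>\<^sub>T r = (\<rho> \<otimes>\<^sub>T ID S) \<circ>\<^sub>T r"
  using par_split_second_first[of \<rho> II X r II S] by simp

lemma effect_tensor_left: "a \<in> Tr T X II \<Longrightarrow> b \<in> Tr T Y II \<Longrightarrow> a \<otimes>\<^sub>T b = a \<circ>\<^sub>T (ID X \<otimes>\<^sub>T b)"
  using par_split_second_first[of a X II b Y II] by simp

lemma effect_tensor_right: "a \<in> Tr T X II \<Longrightarrow> b \<in> Tr T Y II \<Longrightarrow> a \<otimes>\<^sub>T b = b \<circ>\<^sub>T (a \<otimes>\<^sub>T ID Y)"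
  using par_split_first_first[of a X II b Y II] by simp

lemma state_scalar: "\<rho> \<in> Tr T II X \<Longrightarrow> p \<in> Tr T II II \<Longrightarrow> \<rho> \<otimes>\<^sub>T p = \<rho> \<circ>\<^sub>T p"
  using state_tensor_right[of \<rho> X p II] by simp

lemma prb_state_scalar: "\<rho> \<in> Tr T II X \<Longrightarrow> p \<in> Tr T II II \<Longrightarrow> a \<in> Tr T X II \<Longrightarrow>
    prb T (a \<circ>\<^sub>T (\<rho> \<circ>\<^sub>T p)) = prb T (a \<circ>\<^sub>T \<rho>) * prb T p"
  using seqc_assoc[of p II II \<rho> X a II] prb_seqc[of "a \<circ>\<^sub>T \<rho>" p] by auto

lemma swp_trivial: "swp T II II = ID II"
proof -
  have s: "swp T II II \<in> Tr T II II" using swp_Tr[of II II] by simp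
  have "prb T (swp T II II) * prb T (swp T II II) = 1"
    using swp_inv[of II II] prb_seqc[OF s s] prb_test[OF idt_test[of II]] by simp
  moreover have "prb T (swp T II II) \<ge> 0" using prb_range[OF s] by simp
  ultimately have "prb T (swp T II II) = 1"
    by (metis abs_of_nonneg abs_square_eq_1 one_power2 power2_eq_square)
  then show ?thesis using prb_eq_one_imp_id[OF s] by simp
qed

lemma det_eff_swp: "E (sc T B A) \<circ>\<^sub>T swp T A B = E (sc T A B)"
proof -
  have "swp T II II \<circ>\<^sub>T (E A \<otimes>\<^sub>T E B) = (E B \<otimes>\<^sub>T E A) \<circ>\<^sub>T swp T A B"
    using swp_natural[OF det_eff_Tr det_eff_Tr] by simp
  moreover have "E A \<otimes>\<^sub>T E B \<in> Tr T (sc T A B) II" using parc_Tr[OF det_eff_Tr det_eff_Tr, of A B] by simp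
  ultimately show ?thesis using causal_par[of A B] causal_par[of B A] swp_trivial seqc_id_l by metis
qed

section \<open>States, normalisation and marginals\<close>

lemma state_ext: "\<rho> \<in> Tr T II X \<Longrightarrow> \<sigma> \<in> Tr T II X \<Longrightarrow>
    (\<forall>a\<in>Tr T X II. prb T (a \<circ>\<^sub>T \<rho>) = prb T (a \<circ>\<^sub>T \<sigma>)) \<Longrightarrow> \<rho> = \<sigma>"
  using state_ident unfolding St_def Eff_def by blast

lemma state_ext_product_effects:
  assumes "\<rho> \<in> Tr T II (sc T A B)" "\<sigma> \<in> Tr T II (sc T A B)"
    "\<forall>a\<in>Tr T A II. \<forall>b\<in>Tr T B II. prb T ((a \<otimes>\<^sub>T b) \<circ>\<^sub>T \<rho>) = prb T ((a \<otimes>\<^sub>T b) \<circ>\<^sub>T \<sigma>)"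
  shows "\<rho> = \<sigma>"
  using local_discr[of \<rho> A B \<sigma>] assms unfolding St_def Eff_def by auto

lemma St1_Tr: "\<rho> \<in> St1 T X \<Longrightarrow> \<rho> \<in> Tr T II X"
  unfolding St1_def normalized_def St_def by auto

lemma St1I: "\<sigma> \<in> Tr T II X \<Longrightarrow> prb T (E X \<circ>\<^sub>T \<sigma>) = 1 \<Longrightarrow> \<sigma> \<in> St1 T X"
  unfolding St1_def normalized_def St_def by simp

lemma prb_det_eff_St1: "\<rho> \<in> St1 T X \<Longrightarrow> prb T (E X \<circ>\<^sub>T \<rho>) = 1"
  unfolding St1_def normalized_def by simp

lemma det_eff_St1: "\<rho> \<in> St1 T X \<Longrightarrow> E X \<circ>\<^sub>T \<rho> = ID II"
  unfolding St1_def normalized_def St_def by (auto intro!: prb_eq_one_imp_id)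

lemma tensor_St1: "\<Psi> \<in> St1 T X \<Longrightarrow> \<Phi> \<in> St1 T Y \<Longrightarrow> \<Psi> \<otimes>\<^sub>T \<Phi> \<in> St1 T (sc T X Y)"
proof -
  assume a: "\<Psi> \<in> St1 T X" "\<Phi> \<in> St1 T Y"
  have P: "\<Psi> \<in> Tr T II X" "\<Phi> \<in> Tr T II Y" using a St1_Tr by auto
  have "E (sc T X Y) \<circ>\<^sub>T (\<Psi> \<otimes>\<^sub>T \<Phi>) = (E X \<circ>\<^sub>T \<Psi>) \<otimes>\<^sub>T (E Y \<circ>\<^sub>T \<Phi>)"
    using causal_par[of X Y] par_states[OF det_eff_Tr det_eff_Tr P] by simp
  also have "\<dots> = ID II" using det_eff_St1[OF a(1)] det_eff_St1[OF a(2)] parc_id[of II II] by simp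
  finally show ?thesis using parc_Tr[OF P] prb_test[OF idt_test[of II]] by (intro St1I) simp_all
qed

lemma marginal_Tr: "\<Psi> \<in> Tr T II (sc T A C) \<Longrightarrow> marginal T A C \<Psi> \<in> Tr T II A"
  unfolding marginal_def by (auto intro!: Tr_rules)

lemma marginal_St1: "\<Psi> \<in> St1 T (sc T A C) \<Longrightarrow> marginal T A C \<Psi> \<in> St1 T A"
proof -
  assume a: "\<Psi> \<in> St1 T (sc T A C)"
  have P: "\<Psi> \<in> Tr T II (sc T A C)" using a St1_Tr by auto
  have Ie: "ID A \<otimes>\<^sub>T E C \<in> Tr T (sc T A C) A" by (auto intro!: Tr_rules)
  have "E A \<circ>\<^sub>T marginal T A C \<Psi> = (E A \<circ>\<^sub>T (ID A \<otimes>\<^sub>T E C)) \<circ>\<^sub>T \<Psi>"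
    unfolding marginal_def using seqc_assoc[OF P Ie det_eff_Tr] .
  also have "\<dots> = E (sc T A C) \<circ>\<^sub>T \<Psi>"
    using effect_tensor_left[OF det_eff_Tr det_eff_Tr, of A C] causal_par[of A C] by simp
  finally show ?thesis using prb_det_eff_St1[OF a] marginal_Tr[OF P] by (intro St1I) simp_all
qed

lemma local_effect_tensor_St1:
  assumes \<Psi>: "\<Psi> \<in> Tr T II (sc T A C)" and g: "g \<in> Tr T C II" and \<Phi>: "\<Phi> \<in> St1 T W"
  shows "(ID A \<otimes>\<^sub>T (g \<otimes>\<^sub>T E W)) \<circ>\<^sub>T (\<Psi> \<otimes>\<^sub>T \<Phi>) = (ID A \<otimes>\<^sub>T g) \<circ>\<^sub>T \<Psi>"
proof -
  have Ig: "ID A \<otimes>\<^sub>T g \<in> Tr T (sc T A C) A" using parc_Tr[OF idt_Tr g, of A] by simp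
  have "ID A \<otimes>\<^sub>T (g \<otimes>\<^sub>T E W) = (ID A \<otimes>\<^sub>T g) \<otimes>\<^sub>T E W"
    using parc_assoc[OF idt_Tr g det_eff_Tr] by simp
  then have "(ID A \<otimes>\<^sub>T (g \<otimes>\<^sub>T E W)) \<circ>\<^sub>T (\<Psi> \<otimes>\<^sub>T \<Phi>) = ((ID A \<otimes>\<^sub>T g) \<circ>\<^sub>T \<Psi>) \<otimes>\<^sub>T (E W \<circ>\<^sub>T \<Phi>)"
    using par_states[OF Ig det_eff_Tr \<Psi> St1_Tr[OF \<Phi>]] by simp
  also have "\<dots> = (ID A \<otimes>\<^sub>T g) \<circ>\<^sub>T \<Psi>" using det_eff_St1[OF \<Phi>] parc_unit_r[OF Tr_seqI[OF \<Psi> Ig]] by simp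
  finally show ?thesis .
qed

lemma marginal_tensor_St1:
  assumes "\<Psi> \<in> Tr T II (sc T A C)" and "\<Phi> \<in> St1 T W"
  shows "marginal T A (sc T C W) (\<Psi> \<otimes>\<^sub>T \<Phi>) = marginal T A C \<Psi>"
  using local_effect_tensor_St1[OF assms(1) det_eff_Tr assms(2)] causal_par[of C W]
  unfolding marginal_def by simp

lemma marginal_product_left: "\<Psi> \<in> Tr T II X \<Longrightarrow> \<Phi> \<in> St1 T Y \<Longrightarrow> (ID X \<otimes>\<^sub>T E Y) \<circ>\<^sub>T (\<Psi> \<otimes>\<^sub>T \<Phi>) = \<Psi>"
  using par_states[of "ID X" X X "E Y" Y II \<Psi> \<Phi>] St1_Tr det_eff_St1 seqc_id_l by simp

lemma marginal_product_right: "\<Psi> \<in> St1 T X \<Longrightarrow> \<Phi> \<in> Tr T II Y \<Longrightarrow> (E X \<otimes>\<^sub>T ID Y) \<circ>\<^sub>T (\<Psi> \<otimes>\<^sub>T \<Phi>) = \<Phi>"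
  using par_states[of "E X" X II "ID Y" Y Y \<Psi> \<Phi>] St1_Tr det_eff_St1 seqc_id_l by simp

end

section \<open>Coarse-grainings\<close>

text \<open>This set-indexed form of \<open>is_sum\<close> is easier to
  reindex and to compose.\<close>

definition (in opt) sums_to :: "'s \<Rightarrow> 's \<Rightarrow> 't \<Rightarrow> ('i \<Rightarrow> 't) \<Rightarrow> 'i set \<Rightarrow> bool" where
  "sums_to A B C Ds J \<longleftrightarrow> finite J \<and> C \<in> Tr T A B \<and> (\<forall>j\<in>J. Ds j \<in> Tr T A B) \<and>
     (\<forall>S. \<forall>r\<in>Tr T II (sc T A S). \<forall>e\<in>Tr T (sc T B S) II.
        ext_prob T C S r e = (\<Sum>j\<in>J. ext_prob T (Ds j) S r e))"

context opt begin

lemma is_sum_iff_sums_to: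
  assumes "finite Y0"
  shows "is_sum T A B C (map (nth Ds) (sorted_list_of_set Y0)) \<longleftrightarrow> sums_to A B C (nth Ds) Y0"
proof -
  have d: "distinct (sorted_list_of_set Y0)" and st: "set (sorted_list_of_set Y0) = Y0"
    using assms by auto
  have "sum_list (map (\<lambda>(c, D). c * ext_prob T D S r e)
          (map (\<lambda>D. (1, D)) (map ((!) Ds) (sorted_list_of_set Y0))))
        = (\<Sum>j\<in>Y0. ext_prob T (Ds ! j) S r e)" for S r e
    using sum_list_distinct_conv_sum_set[OF d, of "\<lambda>j. ext_prob T (Ds ! j) S r e"] st
    by (simp add: comp_def)
  then show ?thesis
    unfolding is_sum_def acts_lin_def sums_to_def using assms st by auto
qed

lemma sums_to_single: "Ds j = C \<Longrightarrow> C \<in> Tr T A B \<Longrightarrow> sums_to A B C Ds {j}"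
  unfolding sums_to_def by auto

lemma sums_to_reindex:
  assumes s: "sums_to A B C Ds J" and inj: "inj_on h J" and eq: "\<forall>j\<in>J. Fs (h j) = Ds j"
  shows "sums_to A B C Fs (h ` J)"
  using s unfolding sums_to_def by (auto simp: sum.reindex[OF inj] eq)

lemma sums_to_double:
  assumes s: "sums_to A B C F K" and t: "\<forall>k\<in>K. sums_to A B (F k) (H k) J" and fJ: "finite J"
  shows "sums_to A B C (\<lambda>(k,j). H k j) (K \<times> J)"
  unfolding sums_to_def
proof (intro conjI ballI allI)
  show "finite (K \<times> J)" using s fJ by (simp add: sums_to_def)
  show "C \<in> Tr T A B" using s by (simp add: sums_to_def)
  show "(case x of (k, j) \<Rightarrow> H k j) \<in> Tr T A B" if "x \<in> K \<times> J" for x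
    using that t by (auto simp: sums_to_def)
  fix S r e assume r: "r \<in> Tr T II (sc T A S)" and e: "e \<in> Tr T (sc T B S) II"
  have "ext_prob T C S r e = (\<Sum>k\<in>K. ext_prob T (F k) S r e)" using s r e by (simp add: sums_to_def)
  also have "\<dots> = (\<Sum>k\<in>K. \<Sum>j\<in>J. ext_prob T (H k j) S r e)"
    using t r e by (intro sum.cong) (auto simp: sums_to_def)
  also have "\<dots> = (\<Sum>x\<in>K \<times> J. ext_prob T (case x of (k, j) \<Rightarrow> H k j) S r e)"
    by (simp add: sum.cartesian_product split_def)
  finally show "ext_prob T C S r e = (\<Sum>x\<in>K \<times> J. ext_prob T (case x of (k, j) \<Rightarrow> H k j) S r e)" .
qed

text \<open>Post-composing with \<open>G\<close> moves into the test effect; pre-composing with \<open>C\<close> into the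
  input state. Hence coarse-graining commutes with sequential composition on either side.\<close>

lemma ext_prob_seqc:
  assumes C: "C \<in> Tr T A B" and G: "G \<in> Tr T B B'" and r: "r \<in> Tr T II (sc T A S)"
    and e: "e \<in> Tr T (sc T B' S) II"
  shows "ext_prob T (G \<circ>\<^sub>T C) S r e = ext_prob T C S r (e \<circ>\<^sub>T (G \<otimes>\<^sub>T ID S))"
    and "ext_prob T (G \<circ>\<^sub>T C) S r e = ext_prob T G S ((C \<otimes>\<^sub>T ID S) \<circ>\<^sub>T r) e"
proof -
  have C1: "C \<otimes>\<^sub>T ID S \<in> Tr T (sc T A S) (sc T B S)" using parc_Tr[OF C idt_Tr] .
  have G1: "G \<otimes>\<^sub>T ID S \<in> Tr T (sc T B S) (sc T B' S)" using parc_Tr[OF G idt_Tr] .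
  have split: "(G \<circ>\<^sub>T C) \<otimes>\<^sub>T ID S \<circ>\<^sub>T r = (G \<otimes>\<^sub>T ID S) \<circ>\<^sub>T ((C \<otimes>\<^sub>T ID S) \<circ>\<^sub>T r)"
    using seq_par_id_right[OF C G, of S] seqc_assoc_rev[OF r C1 G1] by simp
  then show "ext_prob T (G \<circ>\<^sub>T C) S r e = ext_prob T C S r (e \<circ>\<^sub>T (G \<otimes>\<^sub>T ID S))"
    unfolding ext_prob_def using seqc_assoc_rev[OF Tr_seqI[OF r C1] G1 e] by simp
  show "ext_prob T (G \<circ>\<^sub>T C) S r e = ext_prob T G S ((C \<otimes>\<^sub>T ID S) \<circ>\<^sub>T r) e"
    unfolding ext_prob_def using split by simp
qed

lemma sums_to_seqc_left:
  assumes s: "sums_to A B C Ds J" and G: "G \<in> Tr T B B'"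
  shows "sums_to A B' (G \<circ>\<^sub>T C) (\<lambda>j. G \<circ>\<^sub>T Ds j) J"
proof -
  have C: "C \<in> Tr T A B" and D: "\<And>j. j \<in> J \<Longrightarrow> Ds j \<in> Tr T A B"
    using s by (auto simp: sums_to_def)
  show ?thesis unfolding sums_to_def
  proof (intro conjI ballI allI)
    show "finite J" using s by (simp add: sums_to_def)
    show "G \<circ>\<^sub>T C \<in> Tr T A B'" using C G by auto
    show "G \<circ>\<^sub>T Ds j \<in> Tr T A B'" if "j \<in> J" for j using D[OF that] G by auto
    fix S r e assume r: "r \<in> Tr T II (sc T A S)" and e: "e \<in> Tr T (sc T B' S) II"
    have e': "e \<circ>\<^sub>T (G \<otimes>\<^sub>T ID S) \<in> Tr T (sc T B S) II" using e parc_Tr[OF G idt_Tr, of S] by auto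
    have "ext_prob T (G \<circ>\<^sub>T C) S r e = ext_prob T C S r (e \<circ>\<^sub>T (G \<otimes>\<^sub>T ID S))"
      by (rule ext_prob_seqc(1)[OF C G r e])
    also have "\<dots> = (\<Sum>j\<in>J. ext_prob T (Ds j) S r (e \<circ>\<^sub>T (G \<otimes>\<^sub>T ID S)))"
      using s r e' unfolding sums_to_def by blast
    also have "\<dots> = (\<Sum>j\<in>J. ext_prob T (G \<circ>\<^sub>T Ds j) S r e)"
      using ext_prob_seqc(1)[OF D G r e] by simp
    finally show "ext_prob T (G \<circ>\<^sub>T C) S r e = (\<Sum>j\<in>J. ext_prob T (G \<circ>\<^sub>T Ds j) S r e)" .
  qed
qed

lemma sums_to_seqc_right:
  assumes s: "sums_to B B' G Gs J" and C: "C \<in> Tr T A B"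
  shows "sums_to A B' (G \<circ>\<^sub>T C) (\<lambda>j. Gs j \<circ>\<^sub>T C) J"
proof -
  have G: "G \<in> Tr T B B'" and D: "\<And>j. j \<in> J \<Longrightarrow> Gs j \<in> Tr T B B'"
    using s by (auto simp: sums_to_def)
  show ?thesis unfolding sums_to_def
  proof (intro conjI ballI allI)
    show "finite J" using s by (simp add: sums_to_def)
    show "G \<circ>\<^sub>T C \<in> Tr T A B'" using C G by auto
    show "Gs j \<circ>\<^sub>T C \<in> Tr T A B'" if "j \<in> J" for j using D[OF that] C by auto
    fix S r e assume r: "r \<in> Tr T II (sc T A S)" and e: "e \<in> Tr T (sc T B' S) II"
    have r': "(C \<otimes>\<^sub>T ID S) \<circ>\<^sub>T r \<in> Tr T II (sc T B S)" using r parc_Tr[OF C idt_Tr, of S] by auto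
    have "ext_prob T (G \<circ>\<^sub>T C) S r e = ext_prob T G S ((C \<otimes>\<^sub>T ID S) \<circ>\<^sub>T r) e"
      by (rule ext_prob_seqc(2)[OF C G r e])
    also have "\<dots> = (\<Sum>j\<in>J. ext_prob T (Gs j) S ((C \<otimes>\<^sub>T ID S) \<circ>\<^sub>T r) e)"
      using s r' e unfolding sums_to_def by blast
    also have "\<dots> = (\<Sum>j\<in>J. ext_prob T (Gs j \<circ>\<^sub>T C) S r e)"
      using ext_prob_seqc(2)[OF C D r e] by simp
    finally show "ext_prob T (G \<circ>\<^sub>T C) S r e = (\<Sum>j\<in>J. ext_prob T (Gs j \<circ>\<^sub>T C) S r e)" .
  qed
qed

text \<open>Coarse-graining also commutes with tensoring an identity. The key identity:
  \<open>I_X \<otimes> (G \<otimes> I_S)\<close> is \<open>G \<otimes> I_(SX)\<close> conjugated by swaps.\<close>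

lemma tensor_left_swp_conj:
  assumes G: "G \<in> Tr T A B"
  shows "ID X \<otimes>\<^sub>T (G \<otimes>\<^sub>T ID S)
      = swp T (sc T B S) X \<circ>\<^sub>T ((G \<otimes>\<^sub>T ID (sc T S X)) \<circ>\<^sub>T swp T X (sc T A S))"
proof -
  have G1: "G \<otimes>\<^sub>T ID S \<in> Tr T (sc T A S) (sc T B S)" using parc_Tr[OF G idt_Tr] .
  have M: "ID X \<otimes>\<^sub>T (G \<otimes>\<^sub>T ID S) \<in> Tr T (sc T X (sc T A S)) (sc T X (sc T B S))"
    using parc_Tr[OF idt_Tr G1] .
  have n: "swp T X (sc T B S) \<circ>\<^sub>T (ID X \<otimes>\<^sub>T (G \<otimes>\<^sub>T ID S))
      = ((G \<otimes>\<^sub>T ID S) \<otimes>\<^sub>T ID X) \<circ>\<^sub>T swp T X (sc T A S)"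
    using swp_natural[OF idt_Tr G1] .
  have a: "(G \<otimes>\<^sub>T ID S) \<otimes>\<^sub>T ID X = G \<otimes>\<^sub>T ID (sc T S X)"
    using parc_assoc[OF G idt_Tr idt_Tr] parc_id by simp
  have "ID X \<otimes>\<^sub>T (G \<otimes>\<^sub>T ID S)
      = (swp T (sc T B S) X \<circ>\<^sub>T swp T X (sc T B S)) \<circ>\<^sub>T (ID X \<otimes>\<^sub>T (G \<otimes>\<^sub>T ID S))"
    using swp_inv[of "sc T B S" X] seqc_id_l[OF M] by simp
  also have "\<dots> = swp T (sc T B S) X \<circ>\<^sub>T (swp T X (sc T B S) \<circ>\<^sub>T (ID X \<otimes>\<^sub>T (G \<otimes>\<^sub>T ID S)))"
    using seqc_assoc_rev[OF M swp_Tr swp_Tr] .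
  finally show ?thesis using n a by simp
qed

lemma ext_prob_tensor_left:
  assumes G: "G \<in> Tr T A B" and r: "r \<in> Tr T II (sc T (sc T X A) S)"
    and e: "e \<in> Tr T (sc T (sc T X B) S) II"
  shows "ext_prob T (ID X \<otimes>\<^sub>T G) S r e =
         ext_prob T G (sc T S X) (swp T X (sc T A S) \<circ>\<^sub>T r) (e \<circ>\<^sub>T swp T (sc T B S) X)"
proof -
  have G2: "G \<otimes>\<^sub>T ID (sc T S X) \<in> Tr T (sc T A (sc T S X)) (sc T B (sc T S X))"
    using parc_Tr[OF G idt_Tr] .
  have sw1: "swp T X (sc T A S) \<in> Tr T (sc T X (sc T A S)) (sc T A (sc T S X))"
    using swp_Tr[of X "sc T A S"] by simp
  have sw2: "swp T (sc T B S) X \<in> Tr T (sc T B (sc T S X)) (sc T X (sc T B S))"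
    using swp_Tr[of "sc T B S" X] by simp
  have r': "r \<in> Tr T II (sc T X (sc T A S))" using r by simp
  have a: "(ID X \<otimes>\<^sub>T G) \<otimes>\<^sub>T ID S = ID X \<otimes>\<^sub>T (G \<otimes>\<^sub>T ID S)"
    using parc_assoc[OF idt_Tr G idt_Tr] by simp
  have e1: "(swp T (sc T B S) X \<circ>\<^sub>T (G \<otimes>\<^sub>T ID (sc T S X) \<circ>\<^sub>T swp T X (sc T A S))) \<circ>\<^sub>T r
      = swp T (sc T B S) X \<circ>\<^sub>T (G \<otimes>\<^sub>T ID (sc T S X) \<circ>\<^sub>T (swp T X (sc T A S) \<circ>\<^sub>T r))"
    using seqc_assoc_rev[OF r' Tr_seqI[OF sw1 G2] sw2] seqc_assoc_rev[OF r' sw1 G2] by simp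
  have e2: "e \<circ>\<^sub>T (swp T (sc T B S) X \<circ>\<^sub>T (G \<otimes>\<^sub>T ID (sc T S X) \<circ>\<^sub>T (swp T X (sc T A S) \<circ>\<^sub>T r)))
     = (e \<circ>\<^sub>T swp T (sc T B S) X) \<circ>\<^sub>T (G \<otimes>\<^sub>T ID (sc T S X) \<circ>\<^sub>T (swp T X (sc T A S) \<circ>\<^sub>T r))"
    if "e \<in> Tr T (sc T X (sc T B S)) II"
    using seqc_assoc_rev[OF Tr_seqI[OF Tr_seqI[OF r' sw1] G2] sw2 that] by simp
  show ?thesis unfolding ext_prob_def a tensor_left_swp_conj[OF G] e1 using e2 e by simp
qed

lemma sums_to_tensor_left:
  assumes s: "sums_to A B G Gs J"
  shows "sums_to (sc T X A) (sc T X B) (ID X \<otimes>\<^sub>T G) (\<lambda>j. ID X \<otimes>\<^sub>T Gs j) J"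
proof -
  have G: "G \<in> Tr T A B" and D: "\<And>j. j \<in> J \<Longrightarrow> Gs j \<in> Tr T A B"
    using s by (auto simp: sums_to_def)
  show ?thesis unfolding sums_to_def
  proof (intro conjI ballI allI)
    show "finite J" using s by (simp add: sums_to_def)
    show "ID X \<otimes>\<^sub>T G \<in> Tr T (sc T X A) (sc T X B)" using parc_Tr[OF idt_Tr G] .
    show "ID X \<otimes>\<^sub>T Gs j \<in> Tr T (sc T X A) (sc T X B)" if "j \<in> J" for j
      using parc_Tr[OF idt_Tr D[OF that]] .
    fix S r e assume r: "r \<in> Tr T II (sc T (sc T X A) S)" and e: "e \<in> Tr T (sc T (sc T X B) S) II"
    have r': "swp T X (sc T A S) \<circ>\<^sub>T r \<in> Tr T II (sc T A (sc T S X))"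
      using r by (auto intro!: Tr_rules)
    have e': "e \<circ>\<^sub>T swp T (sc T B S) X \<in> Tr T (sc T B (sc T S X)) II"
      using e by (auto intro!: Tr_rules)
    have "ext_prob T (ID X \<otimes>\<^sub>T G) S r e
        = ext_prob T G (sc T S X) (swp T X (sc T A S) \<circ>\<^sub>T r) (e \<circ>\<^sub>T swp T (sc T B S) X)"
      by (rule ext_prob_tensor_left[OF G r e])
    also have "\<dots> = (\<Sum>j\<in>J. ext_prob T (Gs j) (sc T S X)
                        (swp T X (sc T A S) \<circ>\<^sub>T r) (e \<circ>\<^sub>T swp T (sc T B S) X))"
      using s r' e' unfolding sums_to_def by auto
    also have "\<dots> = (\<Sum>j\<in>J. ext_prob T (ID X \<otimes>\<^sub>T Gs j) S r e)"
      using ext_prob_tensor_left[OF D r e] by simp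
    finally show "ext_prob T (ID X \<otimes>\<^sub>T G) S r e = (\<Sum>j\<in>J. ext_prob T (ID X \<otimes>\<^sub>T Gs j) S r e)" .
  qed
qed

lemma sums_to_tensor_right:
  assumes s: "sums_to A B G Gs J"
  shows "sums_to (sc T A Y) (sc T B Y) (G \<otimes>\<^sub>T ID Y) (\<lambda>j. Gs j \<otimes>\<^sub>T ID Y) J"
proof -
  have G: "G \<in> Tr T A B" and D: "\<And>j. j \<in> J \<Longrightarrow> Gs j \<in> Tr T A B"
    using s by (auto simp: sums_to_def)
  have ep: "ext_prob T (F \<otimes>\<^sub>T ID Y) S r e = ext_prob T F (sc T Y S) r e"
    if "F \<in> Tr T A B" for F S r e
  proof -
    have "(F \<otimes>\<^sub>T ID Y) \<otimes>\<^sub>T ID S = F \<otimes>\<^sub>T ID (sc T Y S)"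
      using parc_assoc[OF that idt_Tr idt_Tr] parc_id by simp
    then show ?thesis unfolding ext_prob_def by simp
  qed
  show ?thesis unfolding sums_to_def
  proof (intro conjI ballI allI)
    show "finite J" using s by (simp add: sums_to_def)
    show "G \<otimes>\<^sub>T ID Y \<in> Tr T (sc T A Y) (sc T B Y)" using parc_Tr[OF G idt_Tr] .
    show "Gs j \<otimes>\<^sub>T ID Y \<in> Tr T (sc T A Y) (sc T B Y)" if "j \<in> J" for j
      using parc_Tr[OF D[OF that] idt_Tr] .
    fix S r e assume r: "r \<in> Tr T II (sc T (sc T A Y) S)" and e: "e \<in> Tr T (sc T (sc T B Y) S) II"
    have "ext_prob T G (sc T Y S) r e = (\<Sum>j\<in>J. ext_prob T (Gs j) (sc T Y S) r e)"
      using s r e unfolding sums_to_def by auto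
    then show "ext_prob T (G \<otimes>\<^sub>T ID Y) S r e = (\<Sum>j\<in>J. ext_prob T (Gs j \<otimes>\<^sub>T ID Y) S r e)"
      using ep[OF G] ep[OF D] by simp
  qed
qed

lemma sums_to_det_eff:
  assumes Gs: "Gs \<in> Tests T B II"
  shows "sums_to B II (E B) (nth Gs) {..<length Gs}"
proof -
  have ne: "Gs \<noteq> []" using Tests_Tr[OF Gs] by simp
  obtain Ds where Ds: "Ds \<in> Tests T B II" "length Ds = 1"
    "is_sum T B II (Ds ! 0) (map (nth Gs) (filter (\<lambda>i. (0::nat) = 0) [0..<length Gs]))"
    using coarse_test[OF Gs, of "\<lambda>_. 0" 1] ne by auto
  have "Ds = [Ds ! 0]" using Ds(2) by (cases Ds) auto
  then have "Ds ! 0 = E B" using det_eff_unique Ds(1) by metis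
  moreover have "sorted_list_of_set {..<length Gs} = [0..<length Gs]"
    by (simp add: lessThan_atLeast0)
  ultimately show ?thesis using Ds(3) is_sum_iff_sums_to[of "{..<length Gs}"] by simp
qed

lemma ext_prob_state:
  assumes C: "C \<in> Tr T II X" and r: "r \<in> Tr T II S" and e: "e \<in> Tr T (sc T X S) II"
  shows "ext_prob T C S r e = prb T ((e \<circ>\<^sub>T (ID X \<otimes>\<^sub>T r)) \<circ>\<^sub>T C)"
proof -
  have r1: "ID X \<otimes>\<^sub>T r \<in> Tr T X (sc T X S)" using parc_Tr[OF idt_Tr r, of X] by simp
  have "(C \<otimes>\<^sub>T ID S) \<circ>\<^sub>T r = (ID X \<otimes>\<^sub>T r) \<circ>\<^sub>T C"
    using state_tensor_left[OF C r] state_tensor_right[OF C r] by simp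
  then show ?thesis unfolding ext_prob_def using seqc_assoc_rev[OF C r1 e] by simp
qed

lemma ext_prob_state_trivial:
  assumes C: "C \<in> Tr T II X" and e: "e \<in> Tr T X II"
  shows "ext_prob T C II (ID II) e = prb T (e \<circ>\<^sub>T C)"
proof -
  have "ID X \<otimes>\<^sub>T ID II = ID X" using parc_id[of X II] by simp
  then show ?thesis using ext_prob_state[OF C idt_Tr, of e] e seqc_id_r[OF e] by simp
qed

lemma sums_to_state_iff:
  assumes "finite J" and C: "C \<in> Tr T II X" and D: "\<And>j. j \<in> J \<Longrightarrow> Ds j \<in> Tr T II X"
  shows "sums_to II X C Ds J \<longleftrightarrow> (\<forall>a\<in>Tr T X II. prb T (a \<circ>\<^sub>T C) = (\<Sum>j\<in>J. prb T (a \<circ>\<^sub>T Ds j)))"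
proof
  assume s: "sums_to II X C Ds J"
  show "\<forall>a\<in>Tr T X II. prb T (a \<circ>\<^sub>T C) = (\<Sum>j\<in>J. prb T (a \<circ>\<^sub>T Ds j))"
  proof
    fix a assume a: "a \<in> Tr T X II"
    have "ext_prob T C II (ID II) a = (\<Sum>j\<in>J. ext_prob T (Ds j) II (ID II) a)"
      using s a unfolding sums_to_def by auto
    then show "prb T (a \<circ>\<^sub>T C) = (\<Sum>j\<in>J. prb T (a \<circ>\<^sub>T Ds j))"
      using ext_prob_state_trivial[OF C a] ext_prob_state_trivial[OF D a] by simp
  qed
next
  assume h: "\<forall>a\<in>Tr T X II. prb T (a \<circ>\<^sub>T C) = (\<Sum>j\<in>J. prb T (a \<circ>\<^sub>T Ds j))"
  show "sums_to II X C Ds J" unfolding sums_to_def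
  proof (intro conjI ballI allI)
    show "finite J" "C \<in> Tr T II X" using assms by auto
    show "Ds j \<in> Tr T II X" if "j \<in> J" for j using D that .
    fix S r e assume r: "r \<in> Tr T II (sc T II S)" and e: "e \<in> Tr T (sc T X S) II"
    have r': "r \<in> Tr T II S" using r by simp
    have a: "e \<circ>\<^sub>T (ID X \<otimes>\<^sub>T r) \<in> Tr T X II"
      using Tr_seqI[OF parc_Tr[OF idt_Tr r', of X] e] by simp
    show "ext_prob T C S r e = (\<Sum>j\<in>J. ext_prob T (Ds j) S r e)"
      using ext_prob_state[OF C r' e] ext_prob_state[OF D r' e] h a by simp
  qed
qed

lemma acts_lin_state_iff:
  assumes D: "D \<in> Tr T II X" and C: "C \<in> Tr T II X"
  shows "acts_lin T II X D [(l, C)] \<longleftrightarrow> (\<forall>a\<in>Tr T X II. prb T (a \<circ>\<^sub>T D) = l * prb T (a \<circ>\<^sub>T C))"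
proof
  assume s: "acts_lin T II X D [(l, C)]"
  show "\<forall>a\<in>Tr T X II. prb T (a \<circ>\<^sub>T D) = l * prb T (a \<circ>\<^sub>T C)"
  proof
    fix a assume a: "a \<in> Tr T X II"
    have "ext_prob T D II (ID II) a = l * ext_prob T C II (ID II) a"
      using s a unfolding acts_lin_def by auto
    then show "prb T (a \<circ>\<^sub>T D) = l * prb T (a \<circ>\<^sub>T C)"
      using ext_prob_state_trivial[OF C a] ext_prob_state_trivial[OF D a] by simp
  qed
next
  assume h: "\<forall>a\<in>Tr T X II. prb T (a \<circ>\<^sub>T D) = l * prb T (a \<circ>\<^sub>T C)"
  have "ext_prob T D S r e = l * ext_prob T C S r e"
    if r: "r \<in> Tr T II (sc T II S)" and e: "e \<in> Tr T (sc T X S) II" for S r e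
  proof -
    have r': "r \<in> Tr T II S" using r by simp
    have "e \<circ>\<^sub>T (ID X \<otimes>\<^sub>T r) \<in> Tr T X II"
      using Tr_seqI[OF parc_Tr[OF idt_Tr r', of X] e] by simp
    then show ?thesis using ext_prob_state[OF C r' e] ext_prob_state[OF D r' e] h by simp
  qed
  then show "acts_lin T II X D [(l, C)]" unfolding acts_lin_def using C D by auto
qed

end

section \<open>Refinements\<close>

lemma concat_pos:
  assumes "i < length Ls" "q < length (Ls!i)"
  shows "length (concat (take i Ls)) + q < length (concat Ls)
     \<and> concat Ls ! (length (concat (take i Ls)) + q) = Ls!i!q"
proof -
  have e: "concat Ls = concat (take i Ls) @ (Ls!i) @ concat (drop (Suc i) Ls)"
    using id_take_nth_drop[OF assms(1)] by (metis concat.simps(2) concat_append)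
  show ?thesis using assms(2) by (subst (1 2) e) (simp add: nth_append)
qed

lemma concat_pos_inj:
  assumes "i < length Ls" "q < length (Ls!i)" "i' < length Ls" "q' < length (Ls!i')"
    and eq: "length (concat (take i Ls)) + q = length (concat (take i' Ls)) + q'"
  shows "i = i' \<and> q = q'"
proof -
  have lt: "length (concat (take i Ls)) + q < length (concat (take i' Ls))"
    if "i < i'" "i < length Ls" "q < length (Ls!i)" for i i' q
  proof -
    obtain d where d: "i' = Suc i + d" using \<open>i < i'\<close> less_iff_Suc_add by auto
    have "length (concat (take (Suc i) Ls)) = length (concat (take i Ls)) + length (Ls!i)"
      using that by (simp add: take_Suc_conv_app_nth)
    moreover have "take i' Ls = take (Suc i) Ls @ take d (drop (Suc i) Ls)"
      using d take_add by metis
    then have "length (concat (take (Suc i) Ls)) \<le> length (concat (take i' Ls))"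
      by simp
    ultimately show ?thesis using that by simp
  qed
  have "i = i'"
  proof (rule ccontr)
    assume "i \<noteq> i'"
    then consider "i < i'" | "i' < i" by linarith
    then show False
    proof cases
      case 1
      then show False using lt[OF 1 assms(1,2)] eq by simp
    next
      case 2
      then show False using lt[OF 2 assms(3,4)] eq by simp
    qed
  qed
  then show ?thesis using eq by simp
qed

lemma filter_mem_upt: "J \<subseteq> {..<n} \<Longrightarrow> filter (\<lambda>i. i \<in> J) [0..<n] = sorted_list_of_set J"
proof -
  assume J: "J \<subseteq> {..<n}"
  have "set (filter (\<lambda>i. i \<in> J) [0..<n]) = J" using J by auto
  moreover have "sorted (filter (\<lambda>i. i \<in> J) [0..<n])" "distinct (filter (\<lambda>i. i \<in> J) [0..<n])"
    by (auto intro: sorted_wrt_filter)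
  ultimately show ?thesis
    by (metis sorted_list_of_set_sort_remdups distinct_remdups_id sorted_sort_id)
qed

context opt begin

lemma refines_iff:
  "refines T A B D C \<longleftrightarrow> (\<exists>Ds\<in>Tests T A B. \<exists>Y0. Y0 \<subseteq> {..<length Ds} \<and>
      sums_to A B C (nth Ds) Y0 \<and> D \<in> nth Ds ` Y0)"
  unfolding refines_def using is_sum_iff_sums_to finite_subset[OF _ finite_lessThan] by meson

lemma refines_Tr: "refines T A B D C \<Longrightarrow> D \<in> Tr T A B"
proof -
  assume "refines T A B D C"
  then obtain Ds Y0 x where "Ds \<in> Tests T A B" "Y0 \<subseteq> {..<length Ds}" "x \<in> Y0" "D = Ds ! x"
    unfolding refines_def by blast
  then show ?thesis using Tests_Tr nth_mem by blast
qed

lemma test_part_sums_to: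
  assumes Cs: "Cs \<in> Tests T A B" and J: "J \<subseteq> {..<length Cs}" "J \<noteq> {}"
  shows "\<exists>\<sigma>. sums_to A B \<sigma> (nth Cs) J"
proof -
  define f where "f = (\<lambda>i. if i \<in> J then (0::nat) else 1)"
  define m :: nat where "m = (if J = {..<length Cs} then 1 else 2)"
  have "\<forall>i<length Cs. f i < m" by (simp add: f_def m_def)
  moreover have "\<forall>j<m. \<exists>i<length Cs. f i = j"
  proof (intro allI impI)
    fix j assume j: "j < m"
    show "\<exists>i<length Cs. f i = j"
    proof (cases "j = 0")
      case True
      then show ?thesis using J by (auto simp: f_def)
    next
      case False
      then have "j = 1" "J \<noteq> {..<length Cs}" using j by (auto simp: m_def split: if_splits)
      then obtain i where "i < length Cs" "i \<notin> J" using J(1) by auto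
      then show ?thesis using \<open>j = 1\<close> by (auto simp: f_def)
    qed
  qed
  ultimately obtain Ds where
    "\<forall>j<m. is_sum T A B (Ds ! j) (map (nth Cs) (filter (\<lambda>i. f i = j) [0..<length Cs]))"
    using coarse_test[OF Cs, of f m] by blast
  moreover have "(\<lambda>i. f i = 0) = (\<lambda>i. i \<in> J)" by (auto simp: f_def)
  moreover have "0 < m" by (simp add: m_def)
  ultimately have "is_sum T A B (Ds ! 0) (map (nth Cs) (filter (\<lambda>i. i \<in> J) [0..<length Cs]))"
    by metis
  then show ?thesis
    using is_sum_iff_sums_to[of J] filter_mem_upt[OF J(1)] finite_subset[OF J(1)] by auto
qed

text \<open>Refinements compose: a summand of \<open>G\<close> after a summand of \<open>C\<close> refines \<open>G \<circ> C\<close>, witnessed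
  by the sequential test.\<close>

lemma refines_seqc:
  assumes Es: "Es \<in> Tests T A B" and Y0: "Y0 \<subseteq> {..<length Es}" and sC: "sums_to A B C (nth Es) Y0"
    and Gs: "Gs \<in> Tests T B B'" and K: "K \<subseteq> {..<length Gs}" and sG: "sums_to B B' G (nth Gs) K"
    and j1: "j1 \<in> Y0" and k1: "k1 \<in> K"
  shows "refines T A B' ((Gs!k1) \<circ>\<^sub>T (Es!j1)) (G \<circ>\<^sub>T C)"
proof -
  define Ls where "Ls = map (\<lambda>c. map (\<lambda>d. d \<circ>\<^sub>T c) Gs) Es"
  have Big: "concat Ls \<in> Tests T A B'" unfolding Ls_def using seq_test[OF Es Gs] .
  define h where "h = (\<lambda>(k::nat, j::nat). length (concat (take j Ls)) + k)"
  have pos: "h (k, j) < length (concat Ls) \<and> concat Ls ! h (k, j) = Gs!k \<circ>\<^sub>T Es!j"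
    if "k \<in> K" "j \<in> Y0" for k j
    using concat_pos[of j Ls k] that K Y0 by (auto simp: h_def Ls_def)
  have inj: "inj_on h (K \<times> Y0)"
  proof (rule inj_onI, clarify)
    fix k j k' j' assume "k \<in> K" "j \<in> Y0" "k' \<in> K" "j' \<in> Y0" "h (k, j) = h (k', j')"
    then show "k = k' \<and> j = j'"
      using concat_pos_inj[of j Ls k j' k'] K Y0 by (auto simp: h_def Ls_def)
  qed
  have C: "C \<in> Tr T A B" using sC by (simp add: sums_to_def)
  have GsTr: "Gs ! k \<in> Tr T B B'" if "k \<in> K" for k
    using that K Tests_Tr[OF Gs] nth_mem by blast
  have "sums_to A B' (G \<circ>\<^sub>T C) (\<lambda>(k,j). Gs!k \<circ>\<^sub>T Es!j) (K \<times> Y0)"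
    by (rule sums_to_double[OF sums_to_seqc_right[OF sG C]])
      (use sums_to_seqc_left[OF sC GsTr] finite_subset[OF Y0 finite_lessThan] in auto)
  then have "sums_to A B' (G \<circ>\<^sub>T C) (nth (concat Ls)) (h ` (K \<times> Y0))"
    by (rule sums_to_reindex[OF _ inj]) (use pos in auto)
  moreover have "h ` (K \<times> Y0) \<subseteq> {..<length (concat Ls)}" using pos by auto
  moreover have "(Gs!k1) \<circ>\<^sub>T (Es!j1) \<in> nth (concat Ls) ` (h ` (K \<times> Y0))"
    using pos[OF k1 j1] k1 j1 by force
  ultimately show ?thesis unfolding refines_iff using Big by blast
qed

lemma par_test_left: "Cs \<in> Tests T C D \<Longrightarrow> map (parc T (ID X)) Cs \<in> Tests T (sc T X C) (sc T X D)"
  using par_test[OF idt_test[of X]] by simp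

lemma par_test_right: "Cs \<in> Tests T C D \<Longrightarrow> map (\<lambda>c. c \<otimes>\<^sub>T ID Y) Cs \<in> Tests T (sc T C Y) (sc T D Y)"
proof -
  assume Cs: "Cs \<in> Tests T C D"
  have "concat (map (\<lambda>c. map (parc T c) [ID Y]) Cs) = map (\<lambda>c. c \<otimes>\<^sub>T ID Y) Cs"
    by (induction Cs) auto
  then show ?thesis using par_test[OF Cs idt_test[of Y]] by simp
qed

lemma refines_local_effect_right:
  assumes Es: "Es \<in> Tests T II (sc T X Y)" and Y0: "Y0 \<subseteq> {..<length Es}"
    and sC: "sums_to II (sc T X Y) C (nth Es) Y0" and j1: "j1 \<in> Y0" and b: "b \<in> Tr T Y II"
  shows "refines T II X ((ID X \<otimes>\<^sub>T b) \<circ>\<^sub>T Es!j1) ((ID X \<otimes>\<^sub>T E Y) \<circ>\<^sub>T C)"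
proof -
  obtain Bs where Bs: "Bs \<in> Tests T Y II" "b \<in> set Bs" using Tr_in_test[OF b] by blast
  obtain kb where kb: "kb < length Bs" "Bs ! kb = b" using Bs(2) by (metis in_set_conv_nth)
  define Gs where "Gs = map (parc T (ID X)) Bs"
  have Gs: "Gs \<in> Tests T (sc T X Y) X" using par_test_left[OF Bs(1), of X] by (simp add: Gs_def)
  have "sums_to (sc T X Y) (sc T X II) (ID X \<otimes>\<^sub>T E Y) (\<lambda>j. ID X \<otimes>\<^sub>T (Bs ! j)) {..<length Bs}"
    using sums_to_tensor_left[OF sums_to_det_eff[OF Bs(1)]] .
  then have sG: "sums_to (sc T X Y) X (ID X \<otimes>\<^sub>T E Y) (nth Gs) {..<length Gs}"
    unfolding sums_to_def Gs_def by auto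
  show ?thesis
    using refines_seqc[OF Es Y0 sC Gs _ sG j1, of kb] kb by (simp add: Gs_def)
qed

lemma refines_local_effect_left:
  assumes Es: "Es \<in> Tests T II (sc T X Y)" and Y0: "Y0 \<subseteq> {..<length Es}"
    and sC: "sums_to II (sc T X Y) C (nth Es) Y0" and j1: "j1 \<in> Y0" and a: "a \<in> Tr T X II"
  shows "refines T II Y ((a \<otimes>\<^sub>T ID Y) \<circ>\<^sub>T Es!j1) ((E X \<otimes>\<^sub>T ID Y) \<circ>\<^sub>T C)"
proof -
  obtain Bs where Bs: "Bs \<in> Tests T X II" "a \<in> set Bs" using Tr_in_test[OF a] by blast
  obtain kb where kb: "kb < length Bs" "Bs ! kb = a" using Bs(2) by (metis in_set_conv_nth)
  define Gs where "Gs = map (\<lambda>c. c \<otimes>\<^sub>T ID Y) Bs"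
  have Gs: "Gs \<in> Tests T (sc T X Y) Y" using par_test_right[OF Bs(1), of Y] by (simp add: Gs_def)
  have "sums_to (sc T X Y) (sc T II Y) (E X \<otimes>\<^sub>T ID Y) (\<lambda>j. (Bs ! j) \<otimes>\<^sub>T ID Y) {..<length Bs}"
    using sums_to_tensor_right[OF sums_to_det_eff[OF Bs(1)]] .
  then have sG: "sums_to (sc T X Y) Y (E X \<otimes>\<^sub>T ID Y) (nth Gs) {..<length Gs}"
    unfolding sums_to_def Gs_def by auto
  show ?thesis
    using refines_seqc[OF Es Y0 sC Gs _ sG j1, of kb] kb by (simp add: Gs_def)
qed

lemma refines_marginal:
  assumes P: "\<Psi> \<in> Tr T II (sc T A C)" and c: "c \<in> Tr T C II"
  shows "refines T II A ((ID A \<otimes>\<^sub>T c) \<circ>\<^sub>T \<Psi>) (marginal T A C \<Psi>)"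
proof -
  obtain Ps where Ps: "Ps \<in> Tests T II (sc T A C)" "\<Psi> \<in> set Ps" using Tr_in_test[OF P] by blast
  obtain k where k: "k < length Ps" "Ps ! k = \<Psi>" using Ps(2) by (metis in_set_conv_nth)
  have "refines T II A ((ID A \<otimes>\<^sub>T c) \<circ>\<^sub>T Ps!k) ((ID A \<otimes>\<^sub>T E C) \<circ>\<^sub>T \<Psi>)"
    by (rule refines_local_effect_right[OF Ps(1) _ sums_to_single[of "nth Ps" k \<Psi>, OF k(2) P] _ c])
      (use k in auto)
  then show ?thesis using k unfolding marginal_def by simp
qed

end

section \<open>Pure states\<close>

context opt begin

lemma prb_product_effect:
  assumes D: "D \<in> Tr T II (sc T X Y)" and a: "a \<in> Tr T X II" and b: "b \<in> Tr T Y II"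
  shows "prb T ((a \<otimes>\<^sub>T b) \<circ>\<^sub>T D) = prb T (a \<circ>\<^sub>T ((ID X \<otimes>\<^sub>T b) \<circ>\<^sub>T D))"
    and "prb T ((a \<otimes>\<^sub>T b) \<circ>\<^sub>T D) = prb T (b \<circ>\<^sub>T ((a \<otimes>\<^sub>T ID Y) \<circ>\<^sub>T D))"
proof -
  have "ID X \<otimes>\<^sub>T b \<in> Tr T (sc T X Y) X" using parc_Tr[OF idt_Tr b, of X] by simp
  then show "prb T ((a \<otimes>\<^sub>T b) \<circ>\<^sub>T D) = prb T (a \<circ>\<^sub>T ((ID X \<otimes>\<^sub>T b) \<circ>\<^sub>T D))"
    using effect_tensor_left[OF a b] seqc_assoc[OF D _ a] by simp
  have "a \<otimes>\<^sub>T ID Y \<in> Tr T (sc T X Y) Y" using parc_Tr[OF a idt_Tr, of Y] by simp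
  then show "prb T ((a \<otimes>\<^sub>T b) \<circ>\<^sub>T D) = prb T (b \<circ>\<^sub>T ((a \<otimes>\<^sub>T ID Y) \<circ>\<^sub>T D))"
    using effect_tensor_right[OF a b] seqc_assoc[OF D _ b] by simp
qed

lemma pure_state_refinement:
  assumes "pure_state T X \<Psi>" "refines T II X D \<Psi>"
  shows "\<exists>l\<in>{0..1}. \<forall>a\<in>Tr T X II. prb T (a \<circ>\<^sub>T D) = l * prb T (a \<circ>\<^sub>T \<Psi>)"
proof -
  have P: "\<Psi> \<in> Tr T II X" using assms(1) by (simp add: pure_state_def atomic_def)
  obtain l where "l \<in> {0..1}" "acts_lin T II X D [(l, \<Psi>)]"
    using assms unfolding pure_state_def atomic_def by blast
  then show ?thesis using acts_lin_state_iff[OF refines_Tr[OF assms(2)] P] by blast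
qed

text \<open>If \<open>D\<close> refines \<open>\<Psi> \<otimes> \<Phi>\<close> and one factor is pure, then the statistics of \<open>D\<close> factorise
  through that factor: local conditioning on the other side gives a refinement of it.\<close>

lemma refines_tensor_pure_left:
  assumes \<Psi>: "\<Psi> \<in> St1 T X" "pure_state T X \<Psi>" and \<Phi>: "\<Phi> \<in> St1 T Y"
    and R: "refines T II (sc T X Y) D (\<Psi> \<otimes>\<^sub>T \<Phi>)" and a: "a \<in> Tr T X II" and b: "b \<in> Tr T Y II"
  shows "prb T ((a \<otimes>\<^sub>T b) \<circ>\<^sub>T D) = prb T ((E X \<otimes>\<^sub>T b) \<circ>\<^sub>T D) * prb T (a \<circ>\<^sub>T \<Psi>)"
proof -
  obtain Ds Y0 j1 where Ds: "Ds \<in> Tests T II (sc T X Y)" "Y0 \<subseteq> {..<length Ds}"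
    "sums_to II (sc T X Y) (\<Psi> \<otimes>\<^sub>T \<Phi>) (nth Ds) Y0" "j1 \<in> Y0" "D = Ds ! j1"
    using R unfolding refines_iff by blast
  have DT: "D \<in> Tr T II (sc T X Y)" using refines_Tr[OF R] .
  have "refines T II X ((ID X \<otimes>\<^sub>T b) \<circ>\<^sub>T D) \<Psi>"
    using refines_local_effect_right[OF Ds(1-4) b] marginal_product_left[OF St1_Tr[OF \<Psi>(1)] \<Phi>] Ds(5)
    by simp
  then obtain l where l: "\<forall>a\<in>Tr T X II. prb T (a \<circ>\<^sub>T ((ID X \<otimes>\<^sub>T b) \<circ>\<^sub>T D)) = l * prb T (a \<circ>\<^sub>T \<Psi>)"
    using pure_state_refinement[OF \<Psi>(2)] by blast
  have "prb T ((E X \<otimes>\<^sub>T b) \<circ>\<^sub>T D) = l"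
    using l prb_product_effect(1)[OF DT det_eff_Tr b] prb_det_eff_St1[OF \<Psi>(1)] by simp
  then show ?thesis using l prb_product_effect(1)[OF DT a b] a by simp
qed

lemma refines_tensor_pure_right:
  assumes \<Psi>: "\<Psi> \<in> St1 T X" and \<Phi>: "\<Phi> \<in> St1 T Y" "pure_state T Y \<Phi>"
    and R: "refines T II (sc T X Y) D (\<Psi> \<otimes>\<^sub>T \<Phi>)" and a: "a \<in> Tr T X II" and b: "b \<in> Tr T Y II"
  shows "prb T ((a \<otimes>\<^sub>T b) \<circ>\<^sub>T D) = prb T ((a \<otimes>\<^sub>T E Y) \<circ>\<^sub>T D) * prb T (b \<circ>\<^sub>T \<Phi>)"
proof -
  obtain Ds Y0 j1 where Ds: "Ds \<in> Tests T II (sc T X Y)" "Y0 \<subseteq> {..<length Ds}"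
    "sums_to II (sc T X Y) (\<Psi> \<otimes>\<^sub>T \<Phi>) (nth Ds) Y0" "j1 \<in> Y0" "D = Ds ! j1"
    using R unfolding refines_iff by blast
  have DT: "D \<in> Tr T II (sc T X Y)" using refines_Tr[OF R] .
  have "refines T II Y ((a \<otimes>\<^sub>T ID Y) \<circ>\<^sub>T D) \<Phi>"
    using refines_local_effect_left[OF Ds(1-4) a] marginal_product_right[OF \<Psi> St1_Tr[OF \<Phi>(1)]] Ds(5)
    by simp
  then obtain l where l: "\<forall>b\<in>Tr T Y II. prb T (b \<circ>\<^sub>T ((a \<otimes>\<^sub>T ID Y) \<circ>\<^sub>T D)) = l * prb T (b \<circ>\<^sub>T \<Phi>)"
    using pure_state_refinement[OF \<Phi>(2)] by blast
  have "prb T ((a \<otimes>\<^sub>T E Y) \<circ>\<^sub>T D) = l"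
    using l prb_product_effect(2)[OF DT a det_eff_Tr] prb_det_eff_St1[OF \<Phi>(1)] by simp
  then show ?thesis using l prb_product_effect(2)[OF DT a b] b by simp
qed

text \<open>The product of two pure normalised states is pure: by the two factorisations and local
  discriminability every refinement \<open>D\<close> equals \<open>(\<Psi> \<otimes> \<Phi>) p\<close> for the scalar \<open>p = e D\<close>.\<close>

lemma pure_state_tensor:
  assumes \<Psi>: "\<Psi> \<in> St1 T X" "pure_state T X \<Psi>" and \<Phi>: "\<Phi> \<in> St1 T Y" "pure_state T Y \<Phi>"
  shows "pure_state T (sc T X Y) (\<Psi> \<otimes>\<^sub>T \<Phi>)"
  unfolding pure_state_def atomic_def
proof (intro conjI allI impI)
  have P: "\<Psi> \<in> Tr T II X" and F: "\<Phi> \<in> Tr T II Y" using \<Psi> \<Phi> St1_Tr by auto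
  show PF: "\<Psi> \<otimes>\<^sub>T \<Phi> \<in> Tr T II (sc T X Y)" using parc_Tr[OF P F] by simp
  fix D assume R: "refines T II (sc T X Y) D (\<Psi> \<otimes>\<^sub>T \<Phi>)"
  have DT: "D \<in> Tr T II (sc T X Y)" using refines_Tr[OF R] .
  define p where "p = E (sc T X Y) \<circ>\<^sub>T D"
  have p: "p \<in> Tr T II II" unfolding p_def using DT by auto
  have DPF: "D = (\<Psi> \<otimes>\<^sub>T \<Phi>) \<circ>\<^sub>T p"
  proof (rule state_ext_product_effects[OF DT])
    show "(\<Psi> \<otimes>\<^sub>T \<Phi>) \<circ>\<^sub>T p \<in> Tr T II (sc T X Y)" using PF p by auto
    show "\<forall>a\<in>Tr T X II. \<forall>b\<in>Tr T Y II.
      prb T ((a \<otimes>\<^sub>T b) \<circ>\<^sub>T D) = prb T ((a \<otimes>\<^sub>T b) \<circ>\<^sub>T ((\<Psi> \<otimes>\<^sub>T \<Phi>) \<circ>\<^sub>T p))"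
    proof (intro ballI)
      fix a b assume a: "a \<in> Tr T X II" and b: "b \<in> Tr T Y II"
      have ab: "a \<otimes>\<^sub>T b \<in> Tr T (sc T X Y) II" using parc_Tr[OF a b] by simp
      have "prb T ((a \<otimes>\<^sub>T b) \<circ>\<^sub>T D) = prb T ((E X \<otimes>\<^sub>T E Y) \<circ>\<^sub>T D) * prb T (b \<circ>\<^sub>T \<Phi>) * prb T (a \<circ>\<^sub>T \<Psi>)"
        using refines_tensor_pure_left[OF \<Psi> \<Phi>(1) R a b]
          refines_tensor_pure_right[OF \<Psi>(1) \<Phi> R det_eff_Tr b] by simp
      also have "prb T ((E X \<otimes>\<^sub>T E Y) \<circ>\<^sub>T D) = prb T p" unfolding p_def using causal_par by simp
      also have "prb T p * prb T (b \<circ>\<^sub>T \<Phi>) * prb T (a \<circ>\<^sub>T \<Psi>) = prb T ((a \<otimes>\<^sub>T b) \<circ>\<^sub>T (\<Psi> \<otimes>\<^sub>T \<Phi>)) * prb T p"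
      proof -
        have "a \<circ>\<^sub>T \<Psi> \<in> Tr T II II" "b \<circ>\<^sub>T \<Phi> \<in> Tr T II II" using a b P F by auto
        then show ?thesis using par_states[OF a b P F] prb_parc[of "a \<circ>\<^sub>T \<Psi>" "b \<circ>\<^sub>T \<Phi>"] by simp
      qed
      also have "\<dots> = prb T ((a \<otimes>\<^sub>T b) \<circ>\<^sub>T ((\<Psi> \<otimes>\<^sub>T \<Phi>) \<circ>\<^sub>T p))"
        using prb_state_scalar[OF PF p ab] by simp
      finally show "prb T ((a \<otimes>\<^sub>T b) \<circ>\<^sub>T D) = prb T ((a \<otimes>\<^sub>T b) \<circ>\<^sub>T ((\<Psi> \<otimes>\<^sub>T \<Phi>) \<circ>\<^sub>T p))" .
    qed
  qed
  have "acts_lin T II (sc T X Y) D [(prb T p, \<Psi> \<otimes>\<^sub>T \<Phi>)]"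
    unfolding acts_lin_state_iff[OF DT PF] using DPF prb_state_scalar[OF PF p] by simp
  moreover have "prb T p \<in> {0..1}" using prb_range[OF p] by simp
  ultimately show "\<exists>l\<in>{0..1}. acts_lin T II (sc T X Y) D [(l, \<Psi> \<otimes>\<^sub>T \<Phi>)]" by blast
qed

lemma tensor_purification:
  assumes \<Psi>: "\<Psi> \<in> St1 T (sc T A C)" "pure_state T (sc T A C) \<Psi>"
    and \<Phi>: "\<Phi> \<in> St1 T W" "pure_state T W \<Phi>"
  shows "\<Psi> \<otimes>\<^sub>T \<Phi> \<in> St1 T (sc T A (sc T C W))"
    and "pure_state T (sc T A (sc T C W)) (\<Psi> \<otimes>\<^sub>T \<Phi>)"
    and "marginal T A (sc T C W) (\<Psi> \<otimes>\<^sub>T \<Phi>) = marginal T A C \<Psi>"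
  using tensor_St1[OF \<Psi>(1) \<Phi>(1)] pure_state_tensor[OF \<Psi> \<Phi>]
    marginal_tensor_St1[OF St1_Tr[OF \<Psi>(1)] \<Phi>(1)] by simp_all

text \<open>Invertible transformations map pure states to pure states: a refinement of \<open>G \<sigma>\<close> is
  carried back by the inverse \<open>H\<close> to a refinement of \<open>\<sigma>\<close>.\<close>

lemma pure_state_invertible_image:
  assumes pS: "pure_state T Y \<sigma>" and G: "G \<in> Tr T Y Y'" and H: "H \<in> Tr T Y' Y"
    and HG: "H \<circ>\<^sub>T G = ID Y" and GH: "G \<circ>\<^sub>T H = ID Y'"
  shows "pure_state T Y' (G \<circ>\<^sub>T \<sigma>)"
  unfolding pure_state_def atomic_def
proof (intro conjI allI impI)
  have S: "\<sigma> \<in> Tr T II Y" using pS by (simp add: pure_state_def atomic_def)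
  show GS: "G \<circ>\<^sub>T \<sigma> \<in> Tr T II Y'" using S G by auto
  fix D assume R: "refines T II Y' D (G \<circ>\<^sub>T \<sigma>)"
  then obtain Ds Y0 j1 where Ds: "Ds \<in> Tests T II Y'" and Y0: "Y0 \<subseteq> {..<length Ds}"
    and s: "sums_to II Y' (G \<circ>\<^sub>T \<sigma>) (nth Ds) Y0" and j1: "j1 \<in> Y0" and Dj: "D = Ds ! j1"
    unfolding refines_iff by blast
  have DT: "D \<in> Tr T II Y'" using refines_Tr[OF R] .
  obtain Hs kH where Hs: "Hs \<in> Tests T Y' Y" "kH < length Hs" "Hs ! kH = H"
    using Tr_in_test[OF H] by (metis in_set_conv_nth)
  have "refines T II Y ((Hs!kH) \<circ>\<^sub>T (Ds!j1)) (H \<circ>\<^sub>T (G \<circ>\<^sub>T \<sigma>))"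
    by (rule refines_seqc[OF Ds Y0 s Hs(1) _ sums_to_single[of "nth Hs" kH H, OF Hs(3) H] j1])
      (use Hs(2) in auto)
  moreover have "H \<circ>\<^sub>T (G \<circ>\<^sub>T \<sigma>) = \<sigma>" using seqc_assoc[OF S G H] HG seqc_id_l[OF S] by simp
  ultimately have "refines T II Y (H \<circ>\<^sub>T D) \<sigma>" using Hs Dj by simp
  then obtain l where l01: "l \<in> {0..1}"
    and l: "\<forall>a\<in>Tr T Y II. prb T (a \<circ>\<^sub>T (H \<circ>\<^sub>T D)) = l * prb T (a \<circ>\<^sub>T \<sigma>)"
    using pure_state_refinement[OF pS] by blast
  have "prb T (a \<circ>\<^sub>T D) = l * prb T (a \<circ>\<^sub>T (G \<circ>\<^sub>T \<sigma>))" if a: "a \<in> Tr T Y' II" for a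
  proof -
    have "a \<circ>\<^sub>T D = a \<circ>\<^sub>T ((G \<circ>\<^sub>T H) \<circ>\<^sub>T D)" using GH seqc_id_l[OF DT] by simp
    also have "\<dots> = (a \<circ>\<^sub>T G) \<circ>\<^sub>T (H \<circ>\<^sub>T D)"
      using seqc_assoc_rev[OF DT H G] seqc_assoc_rev[OF Tr_seqI[OF DT H] G a] by simp
    finally show ?thesis using l a G seqc_assoc[OF S G a] by auto
  qed
  then show "\<exists>l\<in>{0..1}. acts_lin T II Y' D [(l, G \<circ>\<^sub>T \<sigma>)]"
    using acts_lin_state_iff[OF DT GS] l01 by blast
qed

end

section \<open>Steering from the purification postulate\<close>

context opt begin

lemma local_seqc:
  assumes \<sigma>: "\<sigma> \<in> Tr T II (sc T A Y)" and f: "f \<in> Tr T Y Y'" and k: "k \<in> Tr T Y' B"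
  shows "(ID A \<otimes>\<^sub>T k) \<circ>\<^sub>T ((ID A \<otimes>\<^sub>T f) \<circ>\<^sub>T \<sigma>) = (ID A \<otimes>\<^sub>T (k \<circ>\<^sub>T f)) \<circ>\<^sub>T \<sigma>"
  using seqc_assoc[OF \<sigma> parc_Tr[OF idt_Tr f] parc_Tr[OF idt_Tr k]] seq_par_id_left[OF f k] by simp

lemma local_map_tensor_state:
  assumes \<Psi>: "\<Psi> \<in> Tr T II (sc T A C)" and \<Phi>: "\<Phi> \<in> Tr T II W" and h: "h \<in> Tr T (sc T C W) B"
  shows "(ID A \<otimes>\<^sub>T h) \<circ>\<^sub>T (\<Psi> \<otimes>\<^sub>T \<Phi>) = (ID A \<otimes>\<^sub>T (h \<circ>\<^sub>T (ID C \<otimes>\<^sub>T \<Phi>))) \<circ>\<^sub>T \<Psi>"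
proof -
  have ICF: "ID C \<otimes>\<^sub>T \<Phi> \<in> Tr T C (sc T C W)" using parc_Tr[OF idt_Tr \<Phi>, of C] by simp
  have "\<Psi> \<otimes>\<^sub>T \<Phi> = (ID (sc T A C) \<otimes>\<^sub>T \<Phi>) \<circ>\<^sub>T \<Psi>" using state_tensor_left[OF \<Psi> \<Phi>] .
  also have "ID (sc T A C) \<otimes>\<^sub>T \<Phi> = ID A \<otimes>\<^sub>T (ID C \<otimes>\<^sub>T \<Phi>)"
    using parc_id[of A C] parc_assoc[OF idt_Tr idt_Tr \<Phi>, of A C] by simp
  finally show ?thesis using local_seqc[OF _ ICF h] \<Psi> by simp
qed

lemma local_effect_marginal:
  assumes \<Phi>: "\<Phi> \<in> Tr T II (sc T (sc T A K) B')" and a: "a \<in> Tr T A II" and c: "c \<in> Tr T K II"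
  shows "a \<circ>\<^sub>T ((ID A \<otimes>\<^sub>T (c \<otimes>\<^sub>T E B')) \<circ>\<^sub>T \<Phi>) = (a \<otimes>\<^sub>T c) \<circ>\<^sub>T marginal T (sc T A K) B' \<Phi>"
proof -
  have cE: "c \<otimes>\<^sub>T E B' \<in> Tr T (sc T K B') II" using parc_Tr[OF c det_eff_Tr] by simp
  have ac: "a \<otimes>\<^sub>T c \<in> Tr T (sc T A K) II" using parc_Tr[OF a c] by simp
  have IcE: "ID A \<otimes>\<^sub>T (c \<otimes>\<^sub>T E B') \<in> Tr T (sc T (sc T A K) B') A" using parc_Tr[OF idt_Tr cE, of A] by simp
  have IE: "ID (sc T A K) \<otimes>\<^sub>T E B' \<in> Tr T (sc T (sc T A K) B') (sc T A K)" by (auto intro!: Tr_rules)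
  have "a \<circ>\<^sub>T (ID A \<otimes>\<^sub>T (c \<otimes>\<^sub>T E B')) = a \<otimes>\<^sub>T (c \<otimes>\<^sub>T E B')" using effect_tensor_left[OF a cE] by simp
  also have "\<dots> = (a \<otimes>\<^sub>T c) \<otimes>\<^sub>T E B'" using parc_assoc[OF a c det_eff_Tr] by simp
  also have "\<dots> = (a \<otimes>\<^sub>T c) \<circ>\<^sub>T (ID (sc T A K) \<otimes>\<^sub>T E B')" using effect_tensor_left[OF ac det_eff_Tr] .
  finally show ?thesis
    unfolding marginal_def using seqc_assoc[OF \<Phi> IcE a] seqc_assoc[OF \<Phi> IE ac] by simp
qed

lemma prb_local_preparation:
  assumes X: "X \<in> Tr T II A" and r: "r \<in> Tr T II K" and a: "a \<in> Tr T A II" and c: "c \<in> Tr T K II"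
  shows "prb T ((a \<otimes>\<^sub>T c) \<circ>\<^sub>T ((ID A \<otimes>\<^sub>T r) \<circ>\<^sub>T X)) = prb T (a \<circ>\<^sub>T X) * prb T (c \<circ>\<^sub>T r)"
proof -
  have Ir: "ID A \<otimes>\<^sub>T r \<in> Tr T A (sc T A K)" using parc_Tr[OF idt_Tr r, of A] by simp
  have ac: "a \<otimes>\<^sub>T c \<in> Tr T (sc T A K) II" using parc_Tr[OF a c] by simp
  have p: "c \<circ>\<^sub>T r \<in> Tr T II II" using r c by auto
  have Ip: "ID A \<otimes>\<^sub>T (c \<circ>\<^sub>T r) \<in> Tr T A A" using parc_Tr[OF idt_Tr p, of A] by simp
  have "(a \<otimes>\<^sub>T c) \<circ>\<^sub>T (ID A \<otimes>\<^sub>T r) = a \<otimes>\<^sub>T (c \<circ>\<^sub>T r)"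
    using interchange[OF idt_Tr a r c] seqc_id_r[OF a] by simp
  also have "\<dots> = a \<circ>\<^sub>T (ID A \<otimes>\<^sub>T (c \<circ>\<^sub>T r))" using effect_tensor_left[OF a p] .
  finally have e1: "(a \<otimes>\<^sub>T c) \<circ>\<^sub>T (ID A \<otimes>\<^sub>T r) = a \<circ>\<^sub>T (ID A \<otimes>\<^sub>T (c \<circ>\<^sub>T r))" .
  have e2: "(ID A \<otimes>\<^sub>T (c \<circ>\<^sub>T r)) \<circ>\<^sub>T X = X \<circ>\<^sub>T (c \<circ>\<^sub>T r)"
    using par_split_first_first[OF X p] state_scalar[OF X p] X by simp
  have "(a \<otimes>\<^sub>T c) \<circ>\<^sub>T ((ID A \<otimes>\<^sub>T r) \<circ>\<^sub>T X) = a \<circ>\<^sub>T (X \<circ>\<^sub>T (c \<circ>\<^sub>T r))"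
    using seqc_assoc[OF X Ir ac] e1 seqc_assoc[OF X Ip a] e2 by simp
  then show ?thesis using prb_state_scalar[OF X p a] by simp
qed

lemma conditional_test:
  assumes Ds: "Ds \<in> Tests T X A" and rs: "\<And>i. i < length Ds \<Longrightarrow> rs i \<in> Tr T A B"
  shows "\<exists>Big pos. Big \<in> Tests T X B \<and> inj_on pos {..<length Ds} \<and>
           (\<forall>i<length Ds. pos i < length Big \<and> Big ! pos i = rs i \<circ>\<^sub>T Ds!i)"
proof -
  have "\<forall>i. \<exists>P q. i < length Ds \<longrightarrow> P \<in> Tests T A B \<and> q < length P \<and> P ! q = rs i"
    using Tr_in_test[OF rs] by (metis in_set_conv_nth)
  then obtain Ps qs where Ps: "\<And>i. i < length Ds \<Longrightarrow>
      Ps i \<in> Tests T A B \<and> qs i < length (Ps i) \<and> Ps i ! qs i = rs i"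
    by metis
  define Ls where "Ls = map (\<lambda>i. map (\<lambda>d. d \<circ>\<^sub>T Ds!i) (Ps i)) [0..<length Ds]"
  have "concat (map (\<lambda>i. map (\<lambda>d. d \<circ>\<^sub>T (Ds ! i)) (map Ps [0..<length Ds] ! i)) [0..<length Ds])
          \<in> Tests T X B"
    by (rule cond_test[OF Ds]) (simp_all add: Ps)
  moreover have "map (\<lambda>i. map (\<lambda>d. d \<circ>\<^sub>T (Ds ! i)) (map Ps [0..<length Ds] ! i)) [0..<length Ds] = Ls"
    unfolding Ls_def by (rule map_cong) auto
  ultimately have Big: "concat Ls \<in> Tests T X B" by simp
  define pos where "pos = (\<lambda>i. length (concat (take i Ls)) + qs i)"
  have bounds: "i < length Ls" "qs i < length (Ls ! i)" if "i < length Ds" for i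
    using that Ps by (auto simp: Ls_def)
  have "inj_on pos {..<length Ds}"
  proof (rule inj_onI)
    fix i i' assume "i \<in> {..<length Ds}" "i' \<in> {..<length Ds}" "pos i = pos i'"
    then show "i = i'"
      using concat_pos_inj[of i Ls "qs i" i' "qs i'"] bounds[of i] bounds[of i'] by (simp add: pos_def)
  qed
  moreover have "pos i < length (concat Ls) \<and> concat Ls ! pos i = rs i \<circ>\<^sub>T Ds!i"
    if "i < length Ds" for i
    using concat_pos[OF bounds[OF that]] that Ps by (simp add: pos_def Ls_def)
  ultimately show ?thesis using Big by blast
qed

lemma conditional_preparation:
  assumes Ds: "Ds \<in> Tests T II A" and Y0: "Y0 \<subseteq> {..<length Ds}" "Y0 \<noteq> {}"
    and rs: "\<And>i. i < length Ds \<Longrightarrow> rs i \<in> Tr T II K"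
  shows "\<exists>\<sigma>\<in>Tr T II (sc T A K). \<forall>a\<in>Tr T (sc T A K) II.
     prb T (a \<circ>\<^sub>T \<sigma>) = (\<Sum>i\<in>Y0. prb T (a \<circ>\<^sub>T ((ID A \<otimes>\<^sub>T rs i) \<circ>\<^sub>T Ds!i)))"
proof -
  have "ID A \<otimes>\<^sub>T rs i \<in> Tr T A (sc T A K)" if "i < length Ds" for i
    using parc_Tr[OF idt_Tr rs[OF that], of A] by simp
  then obtain Big pos where Big: "Big \<in> Tests T II (sc T A K)" and inj_all: "inj_on pos {..<length Ds}"
    and pos: "\<forall>i<length Ds. pos i < length Big \<and> Big ! pos i = (ID A \<otimes>\<^sub>T rs i) \<circ>\<^sub>T Ds!i"
    using conditional_test[OF Ds, of "\<lambda>i. ID A \<otimes>\<^sub>T rs i"] by blast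
  have inj: "inj_on pos Y0" using inj_on_subset[OF inj_all Y0(1)] .
  have posB: "pos i < length Big \<and> Big ! pos i = (ID A \<otimes>\<^sub>T rs i) \<circ>\<^sub>T Ds!i" if "i \<in> Y0" for i
    using pos that Y0(1) by auto
  have "pos ` Y0 \<subseteq> {..<length Big}" using posB by auto
  then obtain \<sigma> where s: "sums_to II (sc T A K) \<sigma> (nth Big) (pos ` Y0)"
    using test_part_sums_to[OF Big] Y0(2) by blast
  have fin: "finite (pos ` Y0)" and \<sigma>T: "\<sigma> \<in> Tr T II (sc T A K)"
    and elT: "\<And>j. j \<in> pos ` Y0 \<Longrightarrow> Big ! j \<in> Tr T II (sc T A K)"
    using s unfolding sums_to_def by blast+
  have "prb T (a \<circ>\<^sub>T \<sigma>) = (\<Sum>i\<in>Y0. prb T (a \<circ>\<^sub>T ((ID A \<otimes>\<^sub>T rs i) \<circ>\<^sub>T Ds!i)))"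
    if a: "a \<in> Tr T (sc T A K) II" for a
  proof -
    have "prb T (a \<circ>\<^sub>T \<sigma>) = (\<Sum>j\<in>pos ` Y0. prb T (a \<circ>\<^sub>T (Big ! j)))"
      using sums_to_state_iff[where Ds="nth Big", OF fin \<sigma>T elT] s a by blast
    also have "\<dots> = (\<Sum>i\<in>Y0. prb T (a \<circ>\<^sub>T (Big ! pos i)))"
      by (rule sum.reindex[OF inj, unfolded comp_def])
    also have "\<dots> = (\<Sum>i\<in>Y0. prb T (a \<circ>\<^sub>T ((ID A \<otimes>\<^sub>T rs i) \<circ>\<^sub>T Ds!i)))"
      using posB by simp
    finally show ?thesis .
  qed
  then show ?thesis using \<sigma>T by blast
qed

text \<open>The summand \<open>D\<close> is marked by one of two perfectly
  distinguishable states, all other summands by the other one.\<close>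

lemma flagged_refinement:
  assumes \<omega>: "\<omega> \<in> St1 T A" and R: "refines T II A D \<omega>"
  shows "\<exists>K \<sigma> f. \<sigma> \<in> St1 T (sc T A K) \<and> f \<in> Tr T K II \<and>
           (\<forall>a\<in>Tr T A II. prb T ((a \<otimes>\<^sub>T f) \<circ>\<^sub>T \<sigma>) = prb T (a \<circ>\<^sub>T D)
                          \<and> prb T ((a \<otimes>\<^sub>T E K) \<circ>\<^sub>T \<sigma>) = prb T (a \<circ>\<^sub>T \<omega>))"
proof -
  have \<omega>T: "\<omega> \<in> Tr T II A" using St1_Tr[OF \<omega>] .
  obtain Ds Y0 i0 where Ds: "Ds \<in> Tests T II A" and Y0: "Y0 \<subseteq> {..<length Ds}"
      and s: "sums_to II A \<omega> (nth Ds) Y0" and i0: "i0 \<in> Y0" and Di: "D = Ds ! i0"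
    using R unfolding refines_iff by blast
  have fY: "finite Y0" and DsT: "\<And>i. i \<in> Y0 \<Longrightarrow> Ds ! i \<in> Tr T II A"
    using s by (auto simp: sums_to_def)
  have \<omega>eq: "\<forall>a\<in>Tr T A II. prb T (a \<circ>\<^sub>T \<omega>) = (\<Sum>i\<in>Y0. prb T (a \<circ>\<^sub>T Ds!i))"
    using sums_to_state_iff[where Ds="nth Ds", OF fY \<omega>T DsT] s by blast
  obtain K \<rho>0 \<rho>1 f f' where r0: "\<rho>0 \<in> St1 T K" and r1: "\<rho>1 \<in> St1 T K"
     and ff: "[f, f'] \<in> Tests T K II" and p0: "prb T (f \<circ>\<^sub>T \<rho>0) = 1" and p1: "prb T (f \<circ>\<^sub>T \<rho>1) = 0"
    using perf_dist by blast
  have fT: "f \<in> Tr T K II" using Tests_Tr[OF ff] by simp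
  define rs where "rs = (\<lambda>i. if i = i0 then \<rho>0 else \<rho>1)"
  have rsT: "rs i \<in> Tr T II K" for i using r0 r1 St1_Tr by (simp add: rs_def)
  have "Y0 \<noteq> {}" using i0 by blast
  then obtain \<sigma> where \<sigma>T: "\<sigma> \<in> Tr T II (sc T A K)" and \<sigma>eq: "\<forall>a\<in>Tr T (sc T A K) II.
     prb T (a \<circ>\<^sub>T \<sigma>) = (\<Sum>i\<in>Y0. prb T (a \<circ>\<^sub>T ((ID A \<otimes>\<^sub>T rs i) \<circ>\<^sub>T Ds!i)))"
    using conditional_preparation[OF Ds Y0, of rs K] rsT by blast
  have stats: "prb T ((a \<otimes>\<^sub>T c) \<circ>\<^sub>T \<sigma>) = (\<Sum>i\<in>Y0. prb T (a \<circ>\<^sub>T Ds!i) * prb T (c \<circ>\<^sub>T rs i))"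
    if a: "a \<in> Tr T A II" and c: "c \<in> Tr T K II" for a c
    using \<sigma>eq parc_Tr[OF a c] prb_local_preparation[OF DsT rsT a c] by simp
  have marg: "prb T ((a \<otimes>\<^sub>T E K) \<circ>\<^sub>T \<sigma>) = prb T (a \<circ>\<^sub>T \<omega>)" if a: "a \<in> Tr T A II" for a
    using stats[OF a det_eff_Tr] \<omega>eq a r0 r1 prb_det_eff_St1 by (simp add: rs_def)
  have flag: "prb T ((a \<otimes>\<^sub>T f) \<circ>\<^sub>T \<sigma>) = prb T (a \<circ>\<^sub>T D)" if a: "a \<in> Tr T A II" for a
  proof -
    have "prb T ((a \<otimes>\<^sub>T f) \<circ>\<^sub>T \<sigma>) = (\<Sum>i\<in>Y0. if i = i0 then prb T (a \<circ>\<^sub>T Ds!i) else 0)"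
      using stats[OF a fT] p0 p1 by (auto simp: rs_def intro!: sum.cong)
    then show ?thesis using fY i0 Di by (simp add: sum.delta)
  qed
  have "\<sigma> \<in> St1 T (sc T A K)"
    using St1I[OF \<sigma>T] marg[OF det_eff_Tr] prb_det_eff_St1[OF \<omega>] causal_par[of A K] by simp
  then show ?thesis using fT marg flag by blast
qed

lemma reversible_swp: "reversible T (sc T A B) (sc T B A) (swp T A B)"
  unfolding reversible_def channel_def
  by (intro conjI exI[of _ "swp T B A"] swp_Tr det_eff_swp swp_inv)

lemma reversible_seqc:
  assumes revU: "reversible T A B U" and revV: "reversible T B C V"
  shows "reversible T A C (V \<circ>\<^sub>T U)"
proof -
  obtain U' where U: "U \<in> Tr T A B" "E B \<circ>\<^sub>T U = E A" and U': "U' \<in> Tr T B A" "E A \<circ>\<^sub>T U' = E B"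
    and UU: "U' \<circ>\<^sub>T U = ID A" "U \<circ>\<^sub>T U' = ID B"
    using revU unfolding reversible_def channel_def by blast
  obtain V' where V: "V \<in> Tr T B C" "E C \<circ>\<^sub>T V = E B" and V': "V' \<in> Tr T C B" "E B \<circ>\<^sub>T V' = E C"
    and VV: "V' \<circ>\<^sub>T V = ID B" "V \<circ>\<^sub>T V' = ID C"
    using revV unfolding reversible_def channel_def by blast
  have "E C \<circ>\<^sub>T (V \<circ>\<^sub>T U) = E A" using seqc_assoc[OF U(1) V(1) det_eff_Tr] U V by simp
  moreover have "E A \<circ>\<^sub>T (U' \<circ>\<^sub>T V') = E C" using seqc_assoc[OF V'(1) U'(1) det_eff_Tr] U' V' by simp
  moreover have "(U' \<circ>\<^sub>T V') \<circ>\<^sub>T (V \<circ>\<^sub>T U) = ID A"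
    using seqc_assoc_rev[OF U(1) V(1) Tr_seqI[OF V'(1) U'(1)]] seqc_assoc_rev[OF V(1) V'(1) U'(1)]
      VV(1) seqc_id_r[OF U'(1)] UU(1) by simp
  moreover have "(V \<circ>\<^sub>T U) \<circ>\<^sub>T (U' \<circ>\<^sub>T V') = ID C"
    using seqc_assoc_rev[OF V'(1) U'(1) Tr_seqI[OF U(1) V(1)]] seqc_assoc_rev[OF U'(1) U(1) V(1)]
      UU(2) seqc_id_r[OF V(1)] VV(2) by simp
  ultimately show ?thesis
    unfolding reversible_def channel_def using U V U' V' by blast
qed

lemma reversible_tensor_id:
  assumes revU: "reversible T A B U"
  shows "reversible T (sc T A S) (sc T B S) (U \<otimes>\<^sub>T ID S)"
proof -
  have channel_tensor: "channel T (sc T X S) (sc T Y S) (F \<otimes>\<^sub>T ID S)"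
    if "channel T X Y F" for X Y F
  proof -
    have F: "F \<in> Tr T X Y" "E Y \<circ>\<^sub>T F = E X" using that unfolding channel_def by auto
    have "E (sc T Y S) \<circ>\<^sub>T (F \<otimes>\<^sub>T ID S) = (E Y \<circ>\<^sub>T F) \<otimes>\<^sub>T (E S \<circ>\<^sub>T ID S)"
      using causal_par[of Y S] interchange[OF F(1) det_eff_Tr idt_Tr det_eff_Tr] by simp
    then show ?thesis
      unfolding channel_def using F causal_par[of X S] seqc_id_r[OF det_eff_Tr] parc_Tr[OF F(1) idt_Tr]
      by simp
  qed
  obtain U' where c: "channel T A B U" "channel T B A U'" and UU: "U' \<circ>\<^sub>T U = ID A" "U \<circ>\<^sub>T U' = ID B"
    using revU unfolding reversible_def by blast
  have "(U' \<otimes>\<^sub>T ID S) \<circ>\<^sub>T (U \<otimes>\<^sub>T ID S) = ID (sc T A S)" "(U \<otimes>\<^sub>T ID S) \<circ>\<^sub>T (U' \<otimes>\<^sub>T ID S) = ID (sc T B S)"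
    using seq_par_id_right c UU parc_id unfolding channel_def by auto
  then show ?thesis unfolding reversible_def using channel_tensor c by blast
qed

text \<open>The reversible relabelling \<open>Z'(AC) \<rightarrow> C(AZ')\<close> used to compare \<open>\<Phi> \<otimes> \<Psi>\<close> with \<open>\<Psi> \<otimes> \<Phi>\<close>.\<close>

lemma reversible_relabelling:
  "\<exists>\<pi>. reversible T (sc T Z' (sc T A C)) (sc T C (sc T A Z')) \<pi>"
proof -
  have "reversible T (sc T Z' (sc T A C)) (sc T (sc T A C) Z') (swp T Z' (sc T A C))"
    by (rule reversible_swp)
  moreover have "reversible T (sc T (sc T A C) Z') (sc T (sc T C A) Z') (swp T A C \<otimes>\<^sub>T ID Z')"
    by (rule reversible_tensor_id[OF reversible_swp])
  ultimately show ?thesis using reversible_seqc by fastforce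
qed

end

context purif_opt begin

text \<open>Every refinement \<open>D\<close> of a normalised state \<open>\<omega>\<close> is prepared from some purification of
  \<open>\<omega>\<close> by a local effect: purify the flagged state and read the flag.\<close>

lemma refinement_from_purification:
  assumes \<omega>: "\<omega> \<in> St1 T A" and R: "refines T II A D \<omega>"
  shows "\<exists>Z \<Phi> g. \<Phi> \<in> St1 T (sc T A Z) \<and> pure_state T (sc T A Z) \<Phi> \<and>
           marginal T A Z \<Phi> = \<omega> \<and> g \<in> Tr T Z II \<and> (ID A \<otimes>\<^sub>T g) \<circ>\<^sub>T \<Phi> = D"
proof -
  obtain K \<sigma> f where \<sigma>: "\<sigma> \<in> St1 T (sc T A K)" and fT: "f \<in> Tr T K II"
    and stats: "\<forall>a\<in>Tr T A II. prb T ((a \<otimes>\<^sub>T f) \<circ>\<^sub>T \<sigma>) = prb T (a \<circ>\<^sub>T D)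
                          \<and> prb T ((a \<otimes>\<^sub>T E K) \<circ>\<^sub>T \<sigma>) = prb T (a \<circ>\<^sub>T \<omega>)"
    using flagged_refinement[OF \<omega> R] by blast
  obtain B \<Phi> where \<Phi>1: "\<Phi> \<in> St1 T (sc T (sc T A K) B)" and p\<Phi>: "pure_state T (sc T (sc T A K) B) \<Phi>"
      and m\<Phi>: "marginal T (sc T A K) B \<Phi> = \<sigma>"
    using purif_exists[OF \<sigma>] by blast
  have \<Phi>T: "\<Phi> \<in> Tr T II (sc T (sc T A K) B)" using St1_Tr[OF \<Phi>1] .
  have local: "prb T (a \<circ>\<^sub>T ((ID A \<otimes>\<^sub>T (c \<otimes>\<^sub>T E B)) \<circ>\<^sub>T \<Phi>)) = prb T ((a \<otimes>\<^sub>T c) \<circ>\<^sub>T \<sigma>)"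
    if "a \<in> Tr T A II" "c \<in> Tr T K II" for a c
    using local_effect_marginal[OF \<Phi>T that] m\<Phi> by simp
  have gT: "f \<otimes>\<^sub>T E B \<in> Tr T (sc T K B) II" using parc_Tr[OF fT det_eff_Tr] by simp
  have "(ID A \<otimes>\<^sub>T (f \<otimes>\<^sub>T E B)) \<circ>\<^sub>T \<Phi> = D"
  proof (rule state_ext)
    show "(ID A \<otimes>\<^sub>T (f \<otimes>\<^sub>T E B)) \<circ>\<^sub>T \<Phi> \<in> Tr T II A" using \<Phi>T parc_Tr[OF idt_Tr gT, of A] by auto
    show "D \<in> Tr T II A" using refines_Tr[OF R] .
  qed (use local[OF _ fT] stats in simp)
  moreover have "marginal T A (sc T K B) \<Phi> = \<omega>"
  proof (rule state_ext)
    show "marginal T A (sc T K B) \<Phi> \<in> Tr T II A" using marginal_Tr \<Phi>T by simp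
    show "\<omega> \<in> Tr T II A" using St1_Tr[OF \<omega>] .
    have "marginal T A (sc T K B) \<Phi> = (ID A \<otimes>\<^sub>T (E K \<otimes>\<^sub>T E B)) \<circ>\<^sub>T \<Phi>"
      unfolding marginal_def using causal_par[of K B] by simp
    then show "\<forall>a\<in>Tr T A II. prb T (a \<circ>\<^sub>T marginal T A (sc T K B) \<Phi>) = prb T (a \<circ>\<^sub>T \<omega>)"
      using local[OF _ det_eff_Tr] stats by simp
  qed
  ultimately show ?thesis using \<Phi>1 p\<Phi> gT
    by (intro exI[of _ "sc T K B"] exI[of _ \<Phi>] exI[of _ "f \<otimes>\<^sub>T E B"]) simp
qed

lemma reversible_purification:
  assumes \<Theta>: "\<Theta> \<in> St1 T (sc T A Y)" "pure_state T (sc T A Y) \<Theta>" and \<pi>: "reversible T Y Y' \<pi>"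
  shows "(ID A \<otimes>\<^sub>T \<pi>) \<circ>\<^sub>T \<Theta> \<in> St1 T (sc T A Y')"
    and "pure_state T (sc T A Y') ((ID A \<otimes>\<^sub>T \<pi>) \<circ>\<^sub>T \<Theta>)"
    and "marginal T A Y' ((ID A \<otimes>\<^sub>T \<pi>) \<circ>\<^sub>T \<Theta>) = marginal T A Y \<Theta>"
proof -
  obtain \<pi>' where \<pi>T: "\<pi> \<in> Tr T Y Y'" "E Y' \<circ>\<^sub>T \<pi> = E Y" and \<pi>'T: "\<pi>' \<in> Tr T Y' Y"
    and inv: "\<pi>' \<circ>\<^sub>T \<pi> = ID Y" "\<pi> \<circ>\<^sub>T \<pi>' = ID Y'"
    using \<pi> unfolding reversible_def channel_def by blast
  have \<Theta>T: "\<Theta> \<in> Tr T II (sc T A Y)" using St1_Tr[OF \<Theta>(1)] .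
  have G: "ID A \<otimes>\<^sub>T \<pi> \<in> Tr T (sc T A Y) (sc T A Y')" using parc_Tr[OF idt_Tr \<pi>T(1)] .
  have H: "ID A \<otimes>\<^sub>T \<pi>' \<in> Tr T (sc T A Y') (sc T A Y)" using parc_Tr[OF idt_Tr \<pi>'T] .
  show "pure_state T (sc T A Y') ((ID A \<otimes>\<^sub>T \<pi>) \<circ>\<^sub>T \<Theta>)"
    by (rule pure_state_invertible_image[OF \<Theta>(2) G H])
      (use seq_par_id_left[OF \<pi>T(1) \<pi>'T] seq_par_id_left[OF \<pi>'T \<pi>T(1)] inv parc_id in simp_all)
  have "E (sc T A Y') \<circ>\<^sub>T (ID A \<otimes>\<^sub>T \<pi>) = (E A \<circ>\<^sub>T ID A) \<otimes>\<^sub>T (E Y' \<circ>\<^sub>T \<pi>)"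
    using causal_par[of A Y'] interchange[OF idt_Tr det_eff_Tr \<pi>T(1) det_eff_Tr] by simp
  then have "E (sc T A Y') \<circ>\<^sub>T (ID A \<otimes>\<^sub>T \<pi>) = E (sc T A Y)"
    using \<pi>T(2) causal_par[of A Y] seqc_id_r[OF det_eff_Tr] by simp
  then show "(ID A \<otimes>\<^sub>T \<pi>) \<circ>\<^sub>T \<Theta> \<in> St1 T (sc T A Y')"
    using St1I Tr_seqI[OF \<Theta>T G] seqc_assoc[OF \<Theta>T G det_eff_Tr] prb_det_eff_St1[OF \<Theta>(1)] by simp
  show "marginal T A Y' ((ID A \<otimes>\<^sub>T \<pi>) \<circ>\<^sub>T \<Theta>) = marginal T A Y \<Theta>"
    unfolding marginal_def using local_seqc[OF \<Theta>T \<pi>T(1) det_eff_Tr] \<pi>T(2) by simp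
qed

text \<open>Both \<open>\<Psi> \<otimes> \<Phi>\<close> and the relabelled
  \<open>\<Phi> \<otimes> \<Psi>\<close> purify the common marginal on the same system, so they differ by a reversible
  channel on the purifying system, through which the effect is pulled back.\<close>

lemma purification_transfer:
  assumes \<Psi>: "\<Psi> \<in> St1 T (sc T A C)" "pure_state T (sc T A C) \<Psi>"
    and \<Phi>: "\<Phi> \<in> St1 T (sc T A Z')" "pure_state T (sc T A Z') \<Phi>"
    and same: "marginal T A Z' \<Phi> = marginal T A C \<Psi>" and g: "g \<in> Tr T Z' II"
  shows "\<exists>b\<in>Tr T C II. (ID A \<otimes>\<^sub>T g) \<circ>\<^sub>T \<Phi> = (ID A \<otimes>\<^sub>T b) \<circ>\<^sub>T \<Psi>"
proof -
  have \<Psi>T: "\<Psi> \<in> Tr T II (sc T A C)" and \<Phi>T: "\<Phi> \<in> Tr T II (sc T A Z')" using \<Psi> \<Phi> St1_Tr by auto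
  obtain \<pi> where \<pi>: "reversible T (sc T Z' (sc T A C)) (sc T C (sc T A Z')) \<pi>"
    using reversible_relabelling by blast
  obtain \<pi>' where \<pi>T: "\<pi> \<in> Tr T (sc T Z' (sc T A C)) (sc T C (sc T A Z'))"
    and \<pi>'T: "\<pi>' \<in> Tr T (sc T C (sc T A Z')) (sc T Z' (sc T A C))" and inv: "\<pi>' \<circ>\<^sub>T \<pi> = ID (sc T Z' (sc T A C))"
    using \<pi> unfolding reversible_def channel_def by blast
  define \<sigma>1 where "\<sigma>1 = \<Psi> \<otimes>\<^sub>T \<Phi>"
  note \<sigma>1 = tensor_purification[OF \<Psi> \<Phi>, folded \<sigma>1_def]
  define \<sigma>2 where "\<sigma>2 = (ID A \<otimes>\<^sub>T \<pi>) \<circ>\<^sub>T (\<Phi> \<otimes>\<^sub>T \<Psi>)"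
  note \<Phi>\<Psi> = tensor_purification[OF \<Phi> \<Psi>]
  have \<sigma>2: "\<sigma>2 \<in> St1 T (sc T A (sc T C (sc T A Z')))" "pure_state T (sc T A (sc T C (sc T A Z'))) \<sigma>2"
    "marginal T A (sc T C (sc T A Z')) \<sigma>2 = marginal T A C \<Psi>"
    using reversible_purification[OF \<Phi>\<Psi>(1,2) \<pi>] \<Phi>\<Psi>(3) same unfolding \<sigma>2_def by simp_all
  obtain U where U: "U \<in> revgroup T (sc T C (sc T A Z'))" and \<sigma>U: "\<sigma>2 = (ID A \<otimes>\<^sub>T U) \<circ>\<^sub>T \<sigma>1"
    using purif_unique[OF \<sigma>1(1) \<sigma>2(1) \<sigma>1(2) \<sigma>2(2)] \<sigma>1(3) \<sigma>2(3) by metis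
  have UT: "U \<in> Tr T (sc T C (sc T A Z')) (sc T C (sc T A Z'))"
    using U by (simp add: revgroup_def reversible_def channel_def)
  define g2 where "g2 = g \<otimes>\<^sub>T E (sc T A C)"
  have g2T: "g2 \<in> Tr T (sc T Z' (sc T A C)) II" unfolding g2_def using parc_Tr[OF g det_eff_Tr] by simp
  define h where "h = (g2 \<circ>\<^sub>T \<pi>') \<circ>\<^sub>T U"
  have hT: "h \<in> Tr T (sc T C (sc T A Z')) II" unfolding h_def using UT \<pi>'T g2T by auto
  have "(ID A \<otimes>\<^sub>T g) \<circ>\<^sub>T \<Phi> = (ID A \<otimes>\<^sub>T g2) \<circ>\<^sub>T (\<Phi> \<otimes>\<^sub>T \<Psi>)"
    unfolding g2_def using local_effect_tensor_St1[OF \<Phi>T g \<Psi>(1)] by simp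
  also have "g2 = (g2 \<circ>\<^sub>T \<pi>') \<circ>\<^sub>T \<pi>" using seqc_assoc[OF \<pi>T \<pi>'T g2T] inv seqc_id_r[OF g2T] by simp
  also have "(ID A \<otimes>\<^sub>T ((g2 \<circ>\<^sub>T \<pi>') \<circ>\<^sub>T \<pi>)) \<circ>\<^sub>T (\<Phi> \<otimes>\<^sub>T \<Psi>) = (ID A \<otimes>\<^sub>T (g2 \<circ>\<^sub>T \<pi>')) \<circ>\<^sub>T \<sigma>2"
    unfolding \<sigma>2_def using local_seqc[OF St1_Tr[OF \<Phi>\<Psi>(1)] \<pi>T Tr_seqI[OF \<pi>'T g2T]] by simp
  also have "\<dots> = (ID A \<otimes>\<^sub>T h) \<circ>\<^sub>T \<sigma>1"
    unfolding \<sigma>U h_def using local_seqc[OF St1_Tr[OF \<sigma>1(1)] UT Tr_seqI[OF \<pi>'T g2T]] by simp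
  also have "\<dots> = (ID A \<otimes>\<^sub>T (h \<circ>\<^sub>T (ID C \<otimes>\<^sub>T \<Phi>))) \<circ>\<^sub>T \<Psi>"
    unfolding \<sigma>1_def using local_map_tensor_state[OF \<Psi>T \<Phi>T] hT by simp
  finally show ?thesis using hT parc_Tr[OF idt_Tr \<Phi>T, of C] by auto
qed

lemma steering:
  assumes \<Psi>: "\<Psi> \<in> St1 T (sc T A C)" "pure_state T (sc T A C) \<Psi>"
    and R: "refines T II A D (marginal T A C \<Psi>)"
  shows "\<exists>b\<in>Tr T C II. D = (ID A \<otimes>\<^sub>T b) \<circ>\<^sub>T \<Psi>"
proof -
  obtain Z \<Phi> g where "\<Phi> \<in> St1 T (sc T A Z)" "pure_state T (sc T A Z) \<Phi>"
      "marginal T A Z \<Phi> = marginal T A C \<Psi>" "g \<in> Tr T Z II" "(ID A \<otimes>\<^sub>T g) \<circ>\<^sub>T \<Phi> = D"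
    using refinement_from_purification[OF marginal_St1[OF \<Psi>(1)] R] by blast
  then show ?thesis using purification_transfer[OF \<Psi>] by metis
qed

end

section \<open>Internal marginal implies dynamical faithfulness\<close>

context opt begin

text \<open>Transformations of \<open>A\<close> that agree on all states of \<open>A\<close> are equal: by local
  discriminability they then agree on all states of every extension \<open>AS\<close>.\<close>

lemma transformation_ext_states:
  assumes X: "X \<in> Tr T A B" and X': "X' \<in> Tr T A B"
    and agree: "\<And>\<rho>. \<rho> \<in> Tr T II A \<Longrightarrow> X \<circ>\<^sub>T \<rho> = X' \<circ>\<^sub>T \<rho>"
  shows "X = X'"
proof (rule trans_ident[OF X X'], intro allI ballI)
  fix S r assume "r \<in> St T (sc T A S)"
  then have rT: "r \<in> Tr T II (sc T A S)" by (simp add: St_def)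
  have stats: "prb T ((a \<otimes>\<^sub>T b) \<circ>\<^sub>T ((Y \<otimes>\<^sub>T ID S) \<circ>\<^sub>T r)) = prb T (a \<circ>\<^sub>T (Y \<circ>\<^sub>T ((ID A \<otimes>\<^sub>T b) \<circ>\<^sub>T r)))"
    if Y: "Y \<in> Tr T A B" and a: "a \<in> Tr T B II" and b: "b \<in> Tr T S II" for Y a b
  proof -
    have YI: "Y \<otimes>\<^sub>T ID S \<in> Tr T (sc T A S) (sc T B S)" using parc_Tr[OF Y idt_Tr] .
    have Ib: "ID A \<otimes>\<^sub>T b \<in> Tr T (sc T A S) A" using parc_Tr[OF idt_Tr b, of A] by simp
    have aY: "a \<circ>\<^sub>T Y \<in> Tr T A II" using a Y by auto
    have "(a \<otimes>\<^sub>T b) \<circ>\<^sub>T (Y \<otimes>\<^sub>T ID S) = (a \<circ>\<^sub>T Y) \<otimes>\<^sub>T b"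
      using interchange[OF Y a idt_Tr b] seqc_id_r[OF b] by simp
    also have "\<dots> = (a \<circ>\<^sub>T Y) \<circ>\<^sub>T (ID A \<otimes>\<^sub>T b)" using effect_tensor_left[OF aY b] .
    finally have "(a \<otimes>\<^sub>T b) \<circ>\<^sub>T ((Y \<otimes>\<^sub>T ID S) \<circ>\<^sub>T r) = (a \<circ>\<^sub>T Y) \<circ>\<^sub>T ((ID A \<otimes>\<^sub>T b) \<circ>\<^sub>T r)"
      using seqc_assoc[OF rT YI parc_Tr[OF a b]] seqc_assoc[OF rT Ib aY] by simp
    then show ?thesis using seqc_assoc[OF Tr_seqI[OF rT Ib] Y a] by simp
  qed
  show "(X \<otimes>\<^sub>T ID S) \<circ>\<^sub>T r = (X' \<otimes>\<^sub>T ID S) \<circ>\<^sub>T r"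
  proof (rule state_ext_product_effects)
    show "(X \<otimes>\<^sub>T ID S) \<circ>\<^sub>T r \<in> Tr T II (sc T B S)" "(X' \<otimes>\<^sub>T ID S) \<circ>\<^sub>T r \<in> Tr T II (sc T B S)"
      using rT parc_Tr[OF X idt_Tr, of S] parc_Tr[OF X' idt_Tr, of S] by auto
    have "(ID A \<otimes>\<^sub>T b) \<circ>\<^sub>T r \<in> Tr T II A" if "b \<in> Tr T S II" for b
      using rT parc_Tr[OF idt_Tr that, of A] by auto
    then show "\<forall>a\<in>Tr T B II. \<forall>b\<in>Tr T S II.
        prb T ((a \<otimes>\<^sub>T b) \<circ>\<^sub>T ((X \<otimes>\<^sub>T ID S) \<circ>\<^sub>T r)) = prb T ((a \<otimes>\<^sub>T b) \<circ>\<^sub>T ((X' \<otimes>\<^sub>T ID S) \<circ>\<^sub>T r))"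
      using stats[OF X] stats[OF X'] agree by simp
  qed
qed

lemma svec_eval: "e \<in> Tr T A II \<Longrightarrow> svec T A \<rho> e = prb T (e \<circ>\<^sub>T \<rho>)"
  unfolding svec_def Eff_def by simp

lemma agree_on_span:
  assumes X: "X \<in> Tr T A B" and X': "X' \<in> Tr T A B" and R: "R \<subseteq> Tr T II A"
    and agree: "\<And>D. D \<in> R \<Longrightarrow> X \<circ>\<^sub>T D = X' \<circ>\<^sub>T D"
    and \<rho>: "\<rho> \<in> Tr T II A" and span: "svec T A \<rho> \<in> rspan (svec T A ` R)"
  shows "X \<circ>\<^sub>T \<rho> = X' \<circ>\<^sub>T \<rho>"
proof (rule state_ext)
  show "X \<circ>\<^sub>T \<rho> \<in> Tr T II B" "X' \<circ>\<^sub>T \<rho> \<in> Tr T II B" using \<rho> X X' by auto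
  obtain F c where F: "F \<subseteq> svec T A ` R" and sv: "svec T A \<rho> = (\<lambda>x. \<Sum>v\<in>F. c v * v x)"
    using span unfolding rspan_def by blast
  have eval: "prb T (a \<circ>\<^sub>T (Y \<circ>\<^sub>T D)) = svec T A D (a \<circ>\<^sub>T Y)"
    if "a \<in> Tr T B II" "Y \<in> Tr T A B" "D \<in> Tr T II A" for a Y D
  proof -
    have "a \<circ>\<^sub>T Y \<in> Tr T A II" using that by auto
    then show ?thesis using svec_eval[of "a \<circ>\<^sub>T Y" A D] seqc_assoc[of D II A Y B a II] that by simp
  qed
  show "\<forall>a\<in>Tr T B II. prb T (a \<circ>\<^sub>T (X \<circ>\<^sub>T \<rho>)) = prb T (a \<circ>\<^sub>T (X' \<circ>\<^sub>T \<rho>))"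
  proof
    fix a assume a: "a \<in> Tr T B II"
    have agreeF: "v (a \<circ>\<^sub>T X) = v (a \<circ>\<^sub>T X')" if "v \<in> F" for v
    proof -
      obtain D where D: "D \<in> R" "v = svec T A D" using F \<open>v \<in> F\<close> by blast
      have "D \<in> Tr T II A" using D(1) R by blast
      then show ?thesis using eval[OF a X] eval[OF a X'] agree[OF D(1)] D(2) by metis
    qed
    have "(\<Sum>v\<in>F. c v * v (a \<circ>\<^sub>T X)) = (\<Sum>v\<in>F. c v * v (a \<circ>\<^sub>T X'))"
      by (rule sum.cong) (simp_all add: agreeF)
    then show "prb T (a \<circ>\<^sub>T (X \<circ>\<^sub>T \<rho>)) = prb T (a \<circ>\<^sub>T (X' \<circ>\<^sub>T \<rho>))"
      using eval[OF a X \<rho>] eval[OF a X' \<rho>] sv by simp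
  qed
qed

lemma local_operations_commute:
  assumes \<Psi>: "\<Psi> \<in> Tr T II (sc T A C)" and Y: "Y \<in> Tr T A B" and b: "b \<in> Tr T C II"
  shows "Y \<circ>\<^sub>T ((ID A \<otimes>\<^sub>T b) \<circ>\<^sub>T \<Psi>) = (ID B \<otimes>\<^sub>T b) \<circ>\<^sub>T ((Y \<otimes>\<^sub>T ID C) \<circ>\<^sub>T \<Psi>)"
proof -
  have Ib: "ID A \<otimes>\<^sub>T b \<in> Tr T (sc T A C) A" using parc_Tr[OF idt_Tr b, of A] by simp
  have YI: "Y \<otimes>\<^sub>T ID C \<in> Tr T (sc T A C) (sc T B C)" using parc_Tr[OF Y idt_Tr] .
  have IBb: "ID B \<otimes>\<^sub>T b \<in> Tr T (sc T B C) B" using parc_Tr[OF idt_Tr b, of B] by simp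
  have "Y \<circ>\<^sub>T (ID A \<otimes>\<^sub>T b) = (ID B \<otimes>\<^sub>T b) \<circ>\<^sub>T (Y \<otimes>\<^sub>T ID C)"
    using par_split_second_first[OF Y b] par_split_first_first[OF Y b] Y by simp
  then show ?thesis using seqc_assoc[OF \<Psi> Ib Y] seqc_assoc[OF \<Psi> YI IBb] by simp
qed

end

context purif_opt begin

text \<open>By steering, transformations that agree on \<open>\<Psi>\<close> agree on every refinement of its
  marginal.\<close>

lemma agree_on_refinements:
  assumes \<Psi>: "\<Psi> \<in> St1 T (sc T A C)" "pure_state T (sc T A C) \<Psi>"
    and X: "X \<in> Tr T A B" and X': "X' \<in> Tr T A B"
    and eq: "(X \<otimes>\<^sub>T ID C) \<circ>\<^sub>T \<Psi> = (X' \<otimes>\<^sub>T ID C) \<circ>\<^sub>T \<Psi>"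
    and R: "refines T II A D (marginal T A C \<Psi>)"
  shows "X \<circ>\<^sub>T D = X' \<circ>\<^sub>T D"
proof -
  obtain b where b: "b \<in> Tr T C II" "D = (ID A \<otimes>\<^sub>T b) \<circ>\<^sub>T \<Psi>" using steering[OF \<Psi> R] by blast
  show ?thesis
    using local_operations_commute[OF St1_Tr[OF \<Psi>(1)] X b(1)]
      local_operations_commute[OF St1_Tr[OF \<Psi>(1)] X' b(1)] eq b(2) by simp
qed

theorem internal_imp_dyn_faithful:
  assumes \<Psi>: "\<Psi> \<in> St1 T (sc T A C)" "pure_state T (sc T A C) \<Psi>"
    and int: "internal T A (marginal T A C \<Psi>)"
  shows "dyn_faithful T A C \<Psi>"
  unfolding dyn_faithful_def
proof (intro conjI allI impI)
  show "\<Psi> \<in> St T (sc T A C)" using St1_Tr[OF \<Psi>(1)] by (simp add: St_def)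
  fix B X X' assume X: "X \<in> Tr T A B" and X': "X' \<in> Tr T A B"
    and eq: "(X \<otimes>\<^sub>T ID C) \<circ>\<^sub>T \<Psi> = (X' \<otimes>\<^sub>T ID C) \<circ>\<^sub>T \<Psi>"
  let ?R = "refset T II A (marginal T A C \<Psi>)"
  have R: "?R \<subseteq> Tr T II A" using refines_Tr by (auto simp: refset_def)
  have "svec T A \<rho> \<in> rspan (svec T A ` ?R)" if "\<rho> \<in> Tr T II A" for \<rho>
  proof -
    have "svec T A \<rho> \<in> rspan (svec T A ` St T A)"
      unfolding rspan_def using that
      by (intro CollectI exI[of _ "{svec T A \<rho>}"] exI[of _ "\<lambda>_. 1"]) (auto simp: St_def)
    then show ?thesis using int unfolding internal_def by simp
  qed
  moreover have "X \<circ>\<^sub>T D = X' \<circ>\<^sub>T D" if "D \<in> ?R" for D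
    using agree_on_refinements[OF \<Psi> X X' eq] that by (simp add: refset_def)
  ultimately show "X = X'"
    using transformation_ext_states[OF X X'] agree_on_span[OF X X' R] by blast
qed

end

section \<open>Separating a vector from a finite span by point evaluations\<close>

text \<open>Real-valued functions form a real vector space under pointwise operations; the span
  used in the definition of internal states is its linear span.\<close>

interpretation rfun: vector_space "\<lambda>(c::real) (f::'a \<Rightarrow> real). (\<lambda>x. c * f x)"
  by unfold_locales (auto simp: fun_eq_iff algebra_simps)

lemma sum_fun_apply: "(\<Sum>a\<in>F. (g a :: 'b \<Rightarrow> real)) x = (\<Sum>a\<in>F. g a x)"
  by (induction F rule: infinite_finite_induct) auto

lemma rspan_eq_span: "rspan S = rfun.span S"
proof -
  have e: "(\<lambda>x. \<Sum>v\<in>F. c v * v x) = (\<Sum>v\<in>F. (\<lambda>x. c v * v x))"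
    for F and c :: "('b \<Rightarrow> real) \<Rightarrow> real"
    by (simp add: fun_eq_iff sum_fun_apply)
  show ?thesis unfolding rspan_def rfun.span_explicit e by auto
qed

definition comb_eval :: "(real \<times> 'a) list \<Rightarrow> ('a \<Rightarrow> real) \<Rightarrow> real" where
  "comb_eval ps f = sum_list (map (\<lambda>(c, x). c * f x) ps)"

lemma comb_eval_zero: "comb_eval ps 0 = 0"
  unfolding comb_eval_def by (induction ps) auto

lemma comb_eval_add: "comb_eval ps (f + g) = comb_eval ps f + comb_eval ps g"
  unfolding comb_eval_def by (induction ps) (auto simp: distrib_left)

lemma comb_eval_diff: "comb_eval ps (f - g) = comb_eval ps f - comb_eval ps g"
  unfolding comb_eval_def by (induction ps) (auto simp: right_diff_distrib)

lemma comb_eval_scale: "comb_eval ps (\<lambda>x. k * f x) = k * comb_eval ps f"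
  unfolding comb_eval_def by (induction ps) (auto simp: distrib_left)

lemma comb_eval_append: "comb_eval (ps @ qs) f = comb_eval ps f + comb_eval qs f"
  unfolding comb_eval_def by simp

lemma comb_eval_scale_coeffs: "comb_eval (map (\<lambda>(c, x). (k * c, x)) ps) f = k * comb_eval ps f"
  unfolding comb_eval_def by (induction ps) (auto simp: distrib_left)

lemma comb_eval_span:
  assumes "\<forall>w\<in>S. comb_eval ps w = 0" and "v \<in> rfun.span S"
  shows "comb_eval ps v = 0"
proof -
  have sub: "rfun.subspace {f. comb_eval ps f = 0}"
    unfolding rfun.subspace_def
    by (auto simp: comb_eval_zero comb_eval_add comb_eval_scale)
  have "S \<subseteq> {f. comb_eval ps f = 0}" using assms(1) by auto
  then have "rfun.span S \<subseteq> {f. comb_eval ps f = 0}" using sub by (rule rfun.span_minimal)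
  then show ?thesis using assms(2) by auto
qed

lemma span_shift_notin:
  assumes "v \<notin> rfun.span (insert w S)"
  shows "v - (\<lambda>x. t * w x) \<notin> rfun.span S"
proof
  assume "v - (\<lambda>x. t * w x) \<in> rfun.span S"
  then have "v - (\<lambda>x. t * w x) \<in> rfun.span (insert w S)"
    using rfun.span_mono[of S "insert w S"] by auto
  moreover have "(\<lambda>x. t * w x) \<in> rfun.span (insert w S)"
    using rfun.span_scale[OF rfun.span_base[of w "insert w S"]] by simp
  ultimately have "(v - (\<lambda>x. t * w x)) + (\<lambda>x. t * w x) \<in> rfun.span (insert w S)"
    by (rule rfun.span_add)
  then show False using assms by simp
qed

text \<open>The proof
  is Gaussian elimination along the list of spanning functions.\<close>

lemma separating_combination:
  assumes "\<forall>w\<in>set ws. \<forall>x. x \<notin> Ev \<longrightarrow> w x = 0" and "\<forall>x. x \<notin> Ev \<longrightarrow> v0 x = 0"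
    and "v0 \<notin> rfun.span (set ws)"
  shows "\<exists>ps. snd ` set ps \<subseteq> Ev \<and> (\<forall>w\<in>set ws. comb_eval ps w = 0) \<and> comb_eval ps v0 = 1"
  using assms
proof (induction ws arbitrary: v0)
  case Nil
  then have "v0 \<noteq> 0" using rfun.span_zero by auto
  then obtain x where x: "v0 x \<noteq> 0" by (auto simp: fun_eq_iff)
  then have "x \<in> Ev" using Nil.prems(2) by auto
  then show ?case using x by (intro exI[of _ "[(1 / v0 x, x)]"]) (simp add: comb_eval_def)
next
  case (Cons w ws)
  have ws: "\<forall>w'\<in>set ws. \<forall>x. x \<notin> Ev \<longrightarrow> w' x = 0" and w: "\<forall>x. x \<notin> Ev \<longrightarrow> w x = 0"
    using Cons.prems(1) by auto
  show ?case
  proof (cases "w \<in> rfun.span (set ws)")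
    case True
    then have "rfun.span (set (w # ws)) = rfun.span (set ws)" by (simp add: rfun.span_redundant)
    then obtain ps where ps: "snd ` set ps \<subseteq> Ev" "\<forall>w\<in>set ws. comb_eval ps w = 0" "comb_eval ps v0 = 1"
      using Cons.IH[of v0, OF ws Cons.prems(2)] Cons.prems(3) by auto
    then show ?thesis using comb_eval_span[OF ps(2) True] by auto
  next
    case False
    obtain p where p: "snd ` set p \<subseteq> Ev" "\<forall>w\<in>set ws. comb_eval p w = 0" "comb_eval p w = 1"
      using Cons.IH[of w, OF ws w False] by auto
    define u where "u = v0 - (\<lambda>x. comb_eval p v0 * w x)"
    have "u \<notin> rfun.span (set ws)"
      unfolding u_def using span_shift_notin Cons.prems(3) by simp
    moreover have "\<forall>x. x \<notin> Ev \<longrightarrow> u x = 0" using w Cons.prems(2) by (simp add: u_def)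
    ultimately obtain p' where p': "snd ` set p' \<subseteq> Ev" "\<forall>w\<in>set ws. comb_eval p' w = 0" "comb_eval p' u = 1"
      using Cons.IH[of u, OF ws] by auto
    define q where "q = p' @ map (\<lambda>(c, x). (- comb_eval p' w * c, x)) p"
    have q: "comb_eval q f = comb_eval p' f - comb_eval p' w * comb_eval p f" for f
      unfolding q_def comb_eval_append comb_eval_scale_coeffs by simp
    have "snd ` set q \<subseteq> Ev" using p p' by (auto simp: q_def)
    moreover have "comb_eval q v0 = 1"
      using p'(3) q[of v0] unfolding u_def comb_eval_diff comb_eval_scale by (simp add: mult.commute)
    moreover have "\<forall>w'\<in>set (w # ws). comb_eval q w' = 0" using p p' q by simp
    ultimately show ?thesis by blast
  qed
qed

section \<open>Dynamical faithfulness implies an internal marginal\<close>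

lemma sum_list_rescale:
  fixes L :: "(real \<times> 'a) list" and k :: real and f :: "'a \<Rightarrow> real" and g :: "real \<Rightarrow> real"
  shows "sum_list (map (\<lambda>(l, e). l * f e) (map (\<lambda>(c, x). (g c / k, x)) L))
       = sum_list (map (\<lambda>(c, x). g c * f x) L) / k"
  by (induction L) (auto simp: add_divide_distrib)

lemma sum_list_scaled_weights:
  fixes ps :: "(real \<times> 'a) list" and M :: real and g :: "real \<Rightarrow> real"
  shows "sum_list (map fst (map (\<lambda>(c, x). (g c / M, x)) ps)) = sum_list (map (\<lambda>(c, x). g c) ps) / M"
  by (induction ps) (auto simp: add_divide_distrib)

lemma sum_list_max_le_abs:
  fixes ps :: "(real \<times> 'a) list"
  assumes "\<bar>s\<bar> = 1"
  shows "sum_list (map (\<lambda>(c, x). max (s * c) 0) ps) \<le> sum_list (map (\<lambda>(c, x). \<bar>c\<bar>) ps)"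
proof (rule sum_list_mono)
  show "(case p of (c, x) \<Rightarrow> max (s * c) 0) \<le> (case p of (c, x) \<Rightarrow> \<bar>c\<bar>)" for p
    using abs_ge_self[of "s * fst p"] assms by (simp add: split_beta abs_mult)
qed

lemma sum_list_scaled_parts:
  fixes ps :: "(real \<times> 'a) list" and M :: real and f :: "'a \<Rightarrow> real"
  shows "sum_list (map (\<lambda>(l, e). l * f e) (map (\<lambda>(c, x). (max c 0 / M, x)) ps))
       - sum_list (map (\<lambda>(l, e). l * f e) (map (\<lambda>(c, x). (max (- c) 0 / M, x)) ps))
       = sum_list (map (\<lambda>(c, x). c * f x) ps) / M"
proof (induction ps)
  case (Cons p ps)
  obtain c x where p: "p = (c, x)" by (cases p)
  have "max c 0 / M * f x - max (- c) 0 / M * f x = c * f x / M" by (simp add: max_def field_simps)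
  then show ?case using Cons p by (simp add: add_divide_distrib algebra_simps)
qed simp

context opt begin

text \<open>Finite dimensionality: a state outside the span of a family of states is separated from
  it by a finite combination of effects.\<close>

lemma separating_effects:
  assumes G: "G \<subseteq> svec T A ` St T A" and \<rho>0: "svec T A \<rho>0 \<notin> rfun.span G"
    and \<rho>0T: "\<rho>0 \<in> St T A"
  shows "\<exists>ps. snd ` set ps \<subseteq> Tr T A II \<and> (\<forall>g\<in>rfun.span G. comb_eval ps g = 0)
           \<and> comb_eval ps (svec T A \<rho>0) = 1"
proof -
  obtain F0 where F0: "finite F0" "svec T A ` St T A \<subseteq> rfun.span (svec T A ` F0)"
    using fin_dim rspan_eq_span by metis
  obtain B where B: "B \<subseteq> G" "rfun.independent B" "G \<subseteq> rfun.span B"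
    using rfun.maximal_independent_subset by blast
  have "finite B"
    using rfun.independent_span_bound[OF finite_imageI[OF F0(1)] B(2)] B(1) G F0(2) by blast
  then obtain ws where ws: "set ws = B" using finite_list by blast
  have vanish: "svec T A \<rho> x = 0" if "x \<notin> Tr T A II" for \<rho> x
    using that unfolding svec_def Eff_def by simp
  have "svec T A \<rho>0 \<notin> rfun.span (set ws)" using \<rho>0 rfun.span_mono[OF B(1)] ws by blast
  then obtain ps where ps: "snd ` set ps \<subseteq> Tr T A II" "\<forall>w\<in>set ws. comb_eval ps w = 0"
      "comb_eval ps (svec T A \<rho>0) = 1"
    using separating_combination[of ws "Tr T A II" "svec T A \<rho>0"] ws B(1) G vanish by blast
  have "rfun.span G \<subseteq> rfun.span (set ws)"
    using rfun.span_mono[OF B(3)] ws by (simp add: rfun.span_span)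
  then have "comb_eval ps g = 0" if "g \<in> rfun.span G" for g
    using comb_eval_span[OF ps(2)] that by (meson subsetD)
  then show ?thesis using ps by blast
qed

lemma comb_eval_svec:
  assumes "snd ` set ps \<subseteq> Tr T A II"
  shows "comb_eval ps (svec T A \<tau>) = sum_list (map (\<lambda>(c, x). c * prb T (x \<circ>\<^sub>T \<tau>)) ps)"
  unfolding comb_eval_def using assms
  by (intro arg_cong[where f=sum_list] map_cong) (auto simp: svec_def Eff_def)

lemma ext_prob_effect_trivial:
  assumes C: "C \<in> Tr T A II" and \<tau>: "\<tau> \<in> Tr T II A"
  shows "ext_prob T C II \<tau> (ID II) = prb T (C \<circ>\<^sub>T \<tau>)"
  unfolding ext_prob_def using seqc_id_l[OF Tr_seqI[OF \<tau> C]] C by simp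

text \<open>The zero effect: tensor the deterministic effect with an impossible event.\<close>

lemma zero_effect: "\<exists>z\<in>Tr T A II. \<forall>\<tau>\<in>Tr T II A. prb T (z \<circ>\<^sub>T \<tau>) = 0"
proof -
  obtain K \<rho>0 a0 a1 where r0: "\<rho>0 \<in> St1 T K" and aa: "[a0, a1] \<in> Tests T K II"
      and p: "prb T (a1 \<circ>\<^sub>T \<rho>0) = 0"
    using perf_dist by blast
  have p0: "a1 \<circ>\<^sub>T \<rho>0 \<in> Tr T II II" using Tests_Tr[OF aa] St1_Tr[OF r0] by auto
  have "prb T ((E A \<otimes>\<^sub>T (a1 \<circ>\<^sub>T \<rho>0)) \<circ>\<^sub>T \<tau>) = 0" if \<tau>: "\<tau> \<in> Tr T II A" for \<tau>
  proof -
    have "(E A \<otimes>\<^sub>T (a1 \<circ>\<^sub>T \<rho>0)) \<circ>\<^sub>T (\<tau> \<otimes>\<^sub>T ID II) = (E A \<circ>\<^sub>T \<tau>) \<otimes>\<^sub>T ((a1 \<circ>\<^sub>T \<rho>0) \<circ>\<^sub>T ID II)"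
      using par_states[OF det_eff_Tr p0 \<tau> idt_Tr] .
    then have "(E A \<otimes>\<^sub>T (a1 \<circ>\<^sub>T \<rho>0)) \<circ>\<^sub>T \<tau> = (E A \<circ>\<^sub>T \<tau>) \<otimes>\<^sub>T (a1 \<circ>\<^sub>T \<rho>0)"
      using parc_unit_r[OF \<tau>] seqc_id_r[OF p0] by simp
    then show ?thesis using prb_parc[of "E A \<circ>\<^sub>T \<tau>" "a1 \<circ>\<^sub>T \<rho>0"] p0 \<tau> p by auto
  qed
  moreover have "E A \<otimes>\<^sub>T (a1 \<circ>\<^sub>T \<rho>0) \<in> Tr T A II" using parc_Tr[OF det_eff_Tr p0, of A] by simp
  ultimately show ?thesis by blast
qed

text \<open>Any subnormalised nonnegative combination of effects is realised by an effect, built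
  by repeated convex mixing (the empty combination is the zero effect).\<close>

lemma effect_mixture:
  "(\<forall>(l, e)\<in>set L. 0 \<le> l \<and> e \<in> Tr T A II) \<Longrightarrow> sum_list (map fst L) < 1 \<Longrightarrow>
   \<exists>a\<in>Tr T A II. \<forall>\<tau>\<in>Tr T II A. prb T (a \<circ>\<^sub>T \<tau>) = sum_list (map (\<lambda>(l, e). l * prb T (e \<circ>\<^sub>T \<tau>)) L)"
proof (induction "length L" arbitrary: L)
  case 0
  then show ?case using zero_effect by simp
next
  case (Suc n)
  then obtain l e L0 where L: "L = (l, e) # L0" by (cases L) auto
  have l0: "0 \<le> l" and e: "e \<in> Tr T A II" and L0: "\<forall>(l, e)\<in>set L0. 0 \<le> l \<and> e \<in> Tr T A II"
    using Suc.prems(1) L by auto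
  have "0 \<le> sum_list (map fst L0)" using L0 by (induction L0) auto
  then have l1: "l < 1" and sL0: "sum_list (map fst L0) < 1 - l" using Suc.prems(2) L by auto
  define L' where "L' = map (\<lambda>(l', e'). (l' / (1 - l), e')) L0"
  have "sum_list (map fst L') = sum_list (map fst L0) / (1 - l)"
    using sum_list_scaled_weights[of "\<lambda>c. c" "1 - l" L0] unfolding L'_def
    by (simp add: case_prod_unfold)
  then have "sum_list (map fst L') < 1" using sL0 l1 by simp
  moreover have "\<forall>(l, e)\<in>set L'. 0 \<le> l \<and> e \<in> Tr T A II" using L0 l1 unfolding L'_def by auto
  moreover have "n = length L'" using Suc.hyps L by (simp add: L'_def)
  ultimately obtain a' where a': "a' \<in> Tr T A II"
    "\<forall>\<tau>\<in>Tr T II A. prb T (a' \<circ>\<^sub>T \<tau>) = sum_list (map (\<lambda>(l, e). l * prb T (e \<circ>\<^sub>T \<tau>)) L')"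
    using Suc.hyps(1) by blast
  obtain D where D: "acts_lin T A II D [(l, e), (1 - l, a')]"
    using convex_Tr[OF e a'(1) l0] l1 by fastforce
  have DT: "D \<in> Tr T A II" using D by (simp add: acts_lin_def)
  have "prb T (D \<circ>\<^sub>T \<tau>) = sum_list (map (\<lambda>(l, e). l * prb T (e \<circ>\<^sub>T \<tau>)) L)"
    if \<tau>: "\<tau> \<in> Tr T II A" for \<tau>
  proof -
    have "ext_prob T D II \<tau> (ID II) = l * ext_prob T e II \<tau> (ID II) + (1 - l) * ext_prob T a' II \<tau> (ID II)"
      using D \<tau> unfolding acts_lin_def by auto
    then have "prb T (D \<circ>\<^sub>T \<tau>) = l * prb T (e \<circ>\<^sub>T \<tau>) + (1 - l) * prb T (a' \<circ>\<^sub>T \<tau>)"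
      using ext_prob_effect_trivial[OF DT \<tau>] ext_prob_effect_trivial[OF e \<tau>]
        ext_prob_effect_trivial[OF a'(1) \<tau>] by simp
    also have "(1 - l) * prb T (a' \<circ>\<^sub>T \<tau>) = sum_list (map (\<lambda>(l, e). l * prb T (e \<circ>\<^sub>T \<tau>)) L0)"
      using a'(2) \<tau> l1 sum_list_rescale[of "\<lambda>e. prb T (e \<circ>\<^sub>T \<tau>)" "\<lambda>c. c" "1 - l" L0]
      unfolding L'_def by simp
    finally show ?thesis using L by simp
  qed
  then show ?case using DT by blast
qed

lemma effect_difference:
  assumes ps: "snd ` set ps \<subseteq> Tr T A II"
  shows "\<exists>M>0. \<exists>a\<in>Tr T A II. \<exists>a'\<in>Tr T A II. \<forall>\<tau>\<in>Tr T II A.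
           prb T (a \<circ>\<^sub>T \<tau>) - prb T (a' \<circ>\<^sub>T \<tau>) = comb_eval ps (svec T A \<tau>) / M"
proof -
  define M where "M = 1 + sum_list (map (\<lambda>(c, x). \<bar>c\<bar>) ps)"
  have "0 \<le> sum_list (map (\<lambda>(c, x). \<bar>c\<bar>) ps)" by (induction ps) auto
  then have M: "0 < M" by (simp add: M_def)
  define part where "part s = map (\<lambda>(c, x). (max (s * c) 0 / M, x)) ps" for s :: real
  have part: "\<exists>a\<in>Tr T A II. \<forall>\<tau>\<in>Tr T II A.
      prb T (a \<circ>\<^sub>T \<tau>) = sum_list (map (\<lambda>(l, e). l * prb T (e \<circ>\<^sub>T \<tau>)) (part s))" if "\<bar>s\<bar> = 1" for s
  proof (rule effect_mixture)
    show "\<forall>(l, e)\<in>set (part s). 0 \<le> l \<and> e \<in> Tr T A II" using ps M by (auto simp: part_def)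
    show "sum_list (map fst (part s)) < 1"
      using sum_list_scaled_weights[of "\<lambda>c. max (s * c) 0" M ps] sum_list_max_le_abs[OF that, of ps] M
      by (simp add: part_def M_def)
  qed
  obtain a a' where a: "a \<in> Tr T A II" "a' \<in> Tr T A II"
    and stats: "\<forall>\<tau>\<in>Tr T II A. prb T (a \<circ>\<^sub>T \<tau>) = sum_list (map (\<lambda>(l, e). l * prb T (e \<circ>\<^sub>T \<tau>)) (part 1))"
      "\<forall>\<tau>\<in>Tr T II A. prb T (a' \<circ>\<^sub>T \<tau>) = sum_list (map (\<lambda>(l, e). l * prb T (e \<circ>\<^sub>T \<tau>)) (part (-1)))"
    using part[of 1] part[of "-1"] by auto
  have "prb T (a \<circ>\<^sub>T \<tau>) - prb T (a' \<circ>\<^sub>T \<tau>) = comb_eval ps (svec T A \<tau>) / M" if "\<tau> \<in> Tr T II A" for \<tau>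
    using stats that sum_list_scaled_parts[of "\<lambda>x. prb T (x \<circ>\<^sub>T \<tau>)" M ps] comb_eval_svec[OF ps]
    by (simp add: part_def)
  then show ?thesis using M a by blast
qed

text \<open>Effects agreeing on all refinements of the marginal of \<open>\<Psi>\<close> act identically on \<open>\<Psi>\<close>: the
  conditional state \<open>(a \<otimes> I) \<Psi>\<close> is probed by effects \<open>c\<close> of \<open>C\<close>, and the statistics of \<open>c\<close> on it
  are those of \<open>a\<close> on the refinement \<open>(I \<otimes> c) \<Psi>\<close> of the marginal.\<close>

lemma effects_agreeing_on_refinements:
  assumes \<Psi>: "\<Psi> \<in> Tr T II (sc T A C)" and a: "a \<in> Tr T A II" "a' \<in> Tr T A II"
    and agree: "\<And>D. refines T II A D (marginal T A C \<Psi>) \<Longrightarrow> prb T (a \<circ>\<^sub>T D) = prb T (a' \<circ>\<^sub>T D)"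
  shows "(a \<otimes>\<^sub>T ID C) \<circ>\<^sub>T \<Psi> = (a' \<otimes>\<^sub>T ID C) \<circ>\<^sub>T \<Psi>"
proof (rule state_ext)
  show "(a \<otimes>\<^sub>T ID C) \<circ>\<^sub>T \<Psi> \<in> Tr T II C" "(a' \<otimes>\<^sub>T ID C) \<circ>\<^sub>T \<Psi> \<in> Tr T II C"
    using \<Psi> a by (auto intro!: Tr_rules)
  show "\<forall>c\<in>Tr T C II. prb T (c \<circ>\<^sub>T ((a \<otimes>\<^sub>T ID C) \<circ>\<^sub>T \<Psi>)) = prb T (c \<circ>\<^sub>T ((a' \<otimes>\<^sub>T ID C) \<circ>\<^sub>T \<Psi>))"
  proof
    fix c assume c: "c \<in> Tr T C II"
    have "prb T (a \<circ>\<^sub>T ((ID A \<otimes>\<^sub>T c) \<circ>\<^sub>T \<Psi>)) = prb T (a' \<circ>\<^sub>T ((ID A \<otimes>\<^sub>T c) \<circ>\<^sub>T \<Psi>))"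
      using agree[OF refines_marginal[OF \<Psi> c]] .
    then show "prb T (c \<circ>\<^sub>T ((a \<otimes>\<^sub>T ID C) \<circ>\<^sub>T \<Psi>)) = prb T (c \<circ>\<^sub>T ((a' \<otimes>\<^sub>T ID C) \<circ>\<^sub>T \<Psi>))"
      using prb_product_effect[OF \<Psi> a(1) c] prb_product_effect[OF \<Psi> a(2) c] by simp
  qed
qed

text \<open>If the refinements of the marginal did not span the state space, the separating
  combination of effects would yield two different effects that agree on every refinement of
  the marginal, hence on \<open>\<Psi>\<close>, contradicting faithfulness.\<close>

theorem dyn_faithful_imp_internal:
  assumes \<Psi>: "\<Psi> \<in> Tr T II (sc T A C)" and df: "dyn_faithful T A C \<Psi>"
  shows "internal T A (marginal T A C \<Psi>)"
proof -
  define G where "G = svec T A ` refset T II A (marginal T A C \<Psi>)"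
  have GS: "G \<subseteq> svec T A ` St T A"
    using refines_Tr unfolding G_def refset_def St_def by blast
  have spans: "svec T A \<rho>0 \<in> rfun.span G" if \<rho>0: "\<rho>0 \<in> St T A" for \<rho>0
  proof (rule ccontr)
    assume "svec T A \<rho>0 \<notin> rfun.span G"
    then obtain ps where ps: "snd ` set ps \<subseteq> Tr T A II" "\<forall>g\<in>rfun.span G. comb_eval ps g = 0"
        "comb_eval ps (svec T A \<rho>0) = 1"
      using separating_effects[OF GS _ \<rho>0] by blast
    obtain M a a' where M: "0 < M" and a: "a \<in> Tr T A II" "a' \<in> Tr T A II"
      and diff: "\<forall>\<tau>\<in>Tr T II A. prb T (a \<circ>\<^sub>T \<tau>) - prb T (a' \<circ>\<^sub>T \<tau>) = comb_eval ps (svec T A \<tau>) / M"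
      using effect_difference[OF ps(1)] by blast
    have "prb T (a \<circ>\<^sub>T D) = prb T (a' \<circ>\<^sub>T D)" if R: "refines T II A D (marginal T A C \<Psi>)" for D
    proof -
      have "svec T A D \<in> rfun.span G"
        using R by (intro rfun.span_base) (simp add: G_def refset_def)
      then show ?thesis using diff[rule_format, OF refines_Tr[OF R]] ps(2) by simp
    qed
    then have "a = a'"
      using effects_agreeing_on_refinements[OF \<Psi> a] df a unfolding dyn_faithful_def by blast
    moreover have "prb T (a \<circ>\<^sub>T \<rho>0) - prb T (a' \<circ>\<^sub>T \<rho>0) = 1 / M"
      using diff ps(3) \<rho>0 by (simp add: St_def)
    ultimately show False using M by simp
  qed
  have "rspan G = rspan (svec T A ` St T A)"
    unfolding rspan_eq_span
    using rfun.span_mono[OF GS] rfun.span_minimal[OF _ rfun.subspace_span, of "svec T A ` St T A" G] spans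
    by auto
  then show ?thesis using marginal_Tr[OF \<Psi>] unfolding internal_def G_def by (simp add: St_def)
qed

end

text \<open>Both implications for a pure normalised state; the second statement is the first one
  read for a purification of a given internal state.\<close>

theorem mainTheorem4:
  fixes T :: "('s, 't) opt_data"
  assumes "purif_opt T"
  shows "(\<forall>A C \<Psi>. \<Psi> \<in> St1 T (sc T A C) \<longrightarrow> pure_state T (sc T A C) \<Psi> \<longrightarrow>
            (dyn_faithful T A C \<Psi> \<longleftrightarrow> internal T A (marginal T A C \<Psi>)))
       \<and> (\<forall>A C \<omega> \<Psi>. internal T A \<omega> \<longrightarrow> \<omega> \<in> St1 T A \<longrightarrow>
            \<Psi> \<in> St1 T (sc T A C) \<longrightarrow> pure_state T (sc T A C) \<Psi> \<longrightarrow>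
            marginal T A C \<Psi> = \<omega> \<longrightarrow> dyn_faithful T A C \<Psi>)"
proof -
  interpret purif_opt T by (rule assms)
  have "dyn_faithful T A C \<Psi> \<longleftrightarrow> internal T A (marginal T A C \<Psi>)"
    if "\<Psi> \<in> St1 T (sc T A C)" "pure_state T (sc T A C) \<Psi>" for A C \<Psi>
    using dyn_faithful_imp_internal[OF St1_Tr[OF that(1)]] internal_imp_dyn_faithful[OF that] by blast
  then show ?thesis by blast
qed

end
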